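(* Let $C_{48}\subset\mathbb{P}^2_{\mathbb{C}}$ be the smooth quartic $x^4+y^4+xz^3=0$, and let $\mathcal{L}$ be the arrangement of its $28$ bitangent lines (the $24$ ordinary bitangents together with the $4$ hyperosculating lines). Then the only intersection points of lines of $\mathcal{L}$ are double, triple and quadruple points, and $$n_2(\mathcal{L})=240,\qquad n_3(\mathcal{L})=32,\qquad n_4(\mathcal{L})=7.$$
   Context: A bitangent line of a smooth plane quartic $C$ is a line tangent to $C$ at two distinct points, or a hyperosculating line, i.e. a line meeting $C$ at a single point with local intersection multiplicity $4$; a smooth plane quartic has $28$ bitangents counted this way. For a line arrangement $\mathcal{L}$, $n_i(\mathcal{L})$ denotes the number of points of $\mathbb{P}^2$ lying on exactly $i$ lines of $\mathcal{L}$. *)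

theory Defs
  imports "HOL-Computational_Algebra.Polynomial"
begin

text \<open>Homogeneous coordinates on the complex projective plane: nonzero triples.
  The same triples serve as coefficient vectors of lines (dual plane).\<close>

type_synonym pt3 = "complex \<times> complex \<times> complex"

definition smult3 :: "complex \<Rightarrow> pt3 \<Rightarrow> pt3" where
  "smult3 c p = (case p of (x, y, z) \<Rightarrow> (c * x, c * y, c * z))"

definition proj_class :: "pt3 \<Rightarrow> pt3 set" where
  "proj_class p = {smult3 c p | c. c \<noteq> 0}"

definition P2 :: "pt3 set set" where
  "P2 = {proj_class p | p. p \<noteq> (0, 0, 0)}"

definition incid :: "pt3 \<Rightarrow> pt3 \<Rightarrow> bool" where
  "incid l p = (case l of (a, b, c) \<Rightarrow> case p of (x, y, z) \<Rightarrow> a * x + b * y + c * z = 0)"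

definition F48 :: "pt3 \<Rightarrow> complex" where
  "F48 p = (case p of (x, y, z) \<Rightarrow> x ^ 4 + y ^ 4 + x * z ^ 3)"

definition restr48 :: "pt3 \<Rightarrow> pt3 \<Rightarrow> complex poly" where
  "restr48 p q = (case p of (x0, y0, z0) \<Rightarrow> case q of (x1, y1, z1) \<Rightarrow>
      [:x0, x1:] ^ 4 + [:y0, y1:] ^ 4 + [:x0, x1:] * [:z0, z1:] ^ 3)"

text \<open>Local intersection multiplicity of C48 and the line l at the point p of l:
  order of vanishing at t = 0 of F48 (p + t q), with q any point of l different from p.\<close>
definition int_mult :: "pt3 \<Rightarrow> pt3 \<Rightarrow> nat" where
  "int_mult l p = order 0 (restr48 p (SOME q. incid l q \<and> \<not> (\<exists>c. q = smult3 c p)))"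

definition bitangent48 :: "pt3 \<Rightarrow> bool" where
  "bitangent48 l \<longleftrightarrow> l \<noteq> (0, 0, 0) \<and>
    ((\<exists>p1 p2. p1 \<noteq> (0, 0, 0) \<and> p2 \<noteq> (0, 0, 0) \<and> incid l p1 \<and> incid l p2 \<and>
        proj_class p1 \<noteq> proj_class p2 \<and> int_mult l p1 \<ge> 2 \<and> int_mult l p2 \<ge> 2)
     \<or> (\<exists>p. p \<noteq> (0, 0, 0) \<and> incid l p \<and> int_mult l p = 4 \<and>
        (\<forall>p'. p' \<noteq> (0, 0, 0) \<and> incid l p' \<and> F48 p' = 0 \<longrightarrow> proj_class p' = proj_class p)))"

definition bitangent_arr :: "pt3 set set" where
  "bitangent_arr = {proj_class l | l. bitangent48 l}"

definition lines_through :: "pt3 set set \<Rightarrow> pt3 set \<Rightarrow> pt3 set set" where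
  "lines_through A P = {L \<in> A. \<exists>l\<in>L. \<exists>p\<in>P. incid l p}"

definition n_pts :: "pt3 set set \<Rightarrow> nat \<Rightarrow> nat" where
  "n_pts A i = card {P \<in> P2. card (lines_through A P) = i}"

end

theory Submission
  imports Defs
begin

text \<open>A line \<open>z = \<alpha> x + \<beta> y\<close> is a bitangent of \<open>C48\<close> iff the restriction
  \<open>t\<^sup>4 + (\<alpha> + \<beta> t)\<^sup>3 + 1\<close> of the quartic is the square \<open>(t\<^sup>2 - \<sigma> t + \<pi>)\<^sup>2\<close> of a quadratic
  with distinct roots, or a fourth power; among the lines through the point \<open>(0 : 0 : 1)\<close> of the
  curve only \<open>x = 0\<close> is a bitangent.  Solving the coefficient equations gives the 28 bitangents
  explicitly: two families of twelve lines with coefficients in \<open>\<rat>(\<zeta>, \<rho>)\<close>, where \<open>\<zeta>\<close> is a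
  primitive twelfth root of unity and \<open>\<rho>\<^sup>4 = 8\<surd>3 - 12\<close>, the three hyperflex lines
  \<open>z = -\<zeta>\<^sup>4\<^sup>k x\<close> and \<open>x = 0\<close>.  After scaling the \<open>y\<close>-coordinate by \<open>\<rho>\<close>, concurrency of
  three bitangents is the vanishing of a determinant in \<open>\<int>[\<zeta>]\<close>, which is decided by exact
  computation: there are 32 triple and 7 quadruple points.  Counting the pairs of lines through
  each point, \<open>\<Sum>\<^sub>P (t\<^sub>P choose 2) = (28 choose 2) = 378 = n\<^sub>2 + 3\<cdot>32 + 6\<cdot>7\<close>, gives
  \<open>n\<^sub>2 = 240\<close>.\<close>

section \<open>The ring \<open>\<int>[\<zeta>]\<close> of twelfth roots of unity\<close>

lemma int_square_eq_three_square: fixes m n :: int assumes "m^2 = 3 * n^2" shows "n = 0"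
proof (rule ccontr)
  assume n: "n \<noteq> 0"
  then have m: "m \<noteq> 0" using assms by auto
  have p: "prime (3::int)" by simp
  have "multiplicity 3 (m^2) = 2 * multiplicity 3 m"
    using m p by (simp add: prime_elem_multiplicity_power_distrib)
  moreover have "multiplicity 3 (3 * n^2) = Suc (2 * multiplicity 3 n)"
    using n p by (simp add: prime_elem_multiplicity_mult_distrib prime_elem_multiplicity_power_distrib)
  ultimately have "2 * multiplicity 3 m = Suc (2 * multiplicity 3 n)" using assms by simp
  then show False by presburger
qed

lemma int_plus_int_sqrt3_eq_0: fixes m n :: int assumes "of_int m + of_int n * sqrt 3 = 0" shows "m = 0 \<and> n = 0"
proof -
  have "of_int m = - of_int n * sqrt 3" using assms by (simp add: algebra_simps)
  then have "real_of_int (m^2) = of_int (3 * n^2)" by (simp add: power_mult_distrib)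
  then have "n = 0" by (intro int_square_eq_three_square) (simp only: of_int_eq_iff)
  then show ?thesis using assms by simp
qed

definition zeta12 :: complex where "zeta12 = cis (pi / 6)"

lemma Re_zeta12: "Re zeta12 = sqrt 3 / 2" and Im_zeta12: "Im zeta12 = 1 / 2"
  by (simp_all add: zeta12_def cos_30 sin_30)

lemma zeta12_pow2: "zeta12^2 = Complex (1/2) (sqrt 3 / 2)"
  by (simp add: power2_eq_square complex_eq_iff Re_zeta12 Im_zeta12)

lemma zeta12_pow3: "zeta12^3 = \<i>"
proof -
  have "zeta12^3 = zeta12^2 * zeta12" by (simp add: power2_eq_square power3_eq_cube)
  then show ?thesis by (simp add: zeta12_pow2 complex_eq_iff Re_zeta12 Im_zeta12)
qed

lemma zeta12_pow4: "zeta12^4 = zeta12^2 - 1"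
proof -
  have "zeta12^4 = zeta12^3 * zeta12" by (simp add: power_Suc2 numeral_eq_Suc del: power_Suc)
  then show ?thesis by (simp add: zeta12_pow3 zeta12_pow2 complex_eq_iff Re_zeta12 Im_zeta12)
qed

lemma zeta12_power: "zeta12 ^ j = cis (2 * pi * real j / 12)"
  by (simp add: zeta12_def DeMoivre mult.commute)

lemma zeta12_pow_12: "zeta12 ^ 12 = 1"
  by (simp add: zeta12_power)

lemma root_of_unity_12: assumes "z^12 = 1" shows "\<exists>j<12. z = zeta12 ^ j"
  using bij_betw_roots_unity[of 12] assms by (auto simp: bij_betw_def zeta12_power)

lemma root_of_unity_3: assumes "z^3 = 1" shows "\<exists>k<3. z = zeta12 ^ (4 * k)"
proof -
  have "cis (2 * pi * real k / 3) = zeta12 ^ (4 * k)" for k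
    by (simp add: zeta12_power mult.commute mult.left_commute)
  then show ?thesis using bij_betw_roots_unity[of 3] assms by (auto simp: bij_betw_def)
qed

type_synonym z12 = "int \<times> int \<times> int \<times> int"

fun z12_val :: "z12 \<Rightarrow> complex" where
  "z12_val (a0, a1, a2, a3) = of_int a0 + of_int a1 * zeta12 + of_int a2 * zeta12^2 + of_int a3 * zeta12^3"

fun z12_add :: "z12 \<Rightarrow> z12 \<Rightarrow> z12" where
  "z12_add (a0, a1, a2, a3) (b0, b1, b2, b3) = (a0 + b0, a1 + b1, a2 + b2, a3 + b3)"

fun z12_sub :: "z12 \<Rightarrow> z12 \<Rightarrow> z12" where
  "z12_sub (a0, a1, a2, a3) (b0, b1, b2, b3) = (a0 - b0, a1 - b1, a2 - b2, a3 - b3)"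

text \<open>Schoolbook product, reduced with \<open>\<zeta>\<^sup>4 = \<zeta>\<^sup>2 - 1\<close>, \<open>\<zeta>\<^sup>5 = \<zeta>\<^sup>3 - \<zeta>\<close>, \<open>\<zeta>\<^sup>6 = -1\<close>.\<close>
fun z12_mul :: "z12 \<Rightarrow> z12 \<Rightarrow> z12" where
  "z12_mul (a0, a1, a2, a3) (b0, b1, b2, b3) =
    (a0*b0 - (a1*b3 + a2*b2 + a3*b1) - a3*b3,
     (a0*b1 + a1*b0) - (a2*b3 + a3*b2),
     (a0*b2 + a1*b1 + a2*b0) + (a1*b3 + a2*b2 + a3*b1),
     (a0*b3 + a1*b2 + a2*b1 + a3*b0) + (a2*b3 + a3*b2))"

fun z12_pow :: "z12 \<Rightarrow> nat \<Rightarrow> z12" where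
  "z12_pow a 0 = (1, 0, 0, 0)"
| "z12_pow a (Suc n) = z12_mul a (z12_pow a n)"

lemma z12_pow_numeral [simp]: "z12_pow a (numeral n) = z12_mul a (z12_pow a (pred_numeral n))"
  by (simp add: numeral_eq_Suc)

lemma z12_val_add [simp]: "z12_val (z12_add a b) = z12_val a + z12_val b"
  by (cases a; cases b) (simp add: algebra_simps)

lemma z12_val_sub [simp]: "z12_val (z12_sub a b) = z12_val a - z12_val b"
  by (cases a; cases b) (simp add: algebra_simps)

lemma mult_mod_cyclotomic12:
  fixes z :: complex assumes "z^4 = z^2 - 1"
  shows "(a0 + a1*z + a2*z^2 + a3*z^3) * (b0 + b1*z + b2*z^2 + b3*z^3) =
    (a0*b0 - (a1*b3 + a2*b2 + a3*b1) - a3*b3) + ((a0*b1 + a1*b0) - (a2*b3 + a3*b2)) * z +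
    ((a0*b2 + a1*b1 + a2*b0) + (a1*b3 + a2*b2 + a3*b1)) * z^2 +
    ((a0*b3 + a1*b2 + a2*b1 + a3*b0) + (a2*b3 + a3*b2)) * z^3"
  using assms by algebra

lemma z12_val_mul [simp]: "z12_val (z12_mul a b) = z12_val a * z12_val b"
  by (cases a; cases b)
    (simp only: z12_val.simps z12_mul.simps mult_mod_cyclotomic12[OF zeta12_pow4]
      of_int_add of_int_mult of_int_diff)

lemma z12_val_pow [simp]: "z12_val (z12_pow a n) = z12_val a ^ n"
  by (induction n) simp_all

lemma z12_val_0 [simp]: "z12_val (0, 0, 0, 0) = 0"
  and z12_val_1 [simp]: "z12_val (1, 0, 0, 0) = 1"
  and z12_val_minus_1 [simp]: "z12_val (-1, 0, 0, 0) = -1"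
  by simp_all

declare z12_val.simps [simp del]

lemma z12_val_Re_Im:
  "z12_val (a0, a1, a2, a3) = Complex (a0 + a1 * sqrt 3 / 2 + a2 / 2) (a1 / 2 + a2 * sqrt 3 / 2 + a3)"
  by (simp only: z12_val.simps zeta12_pow2 zeta12_pow3) (simp add: complex_eq_iff Re_zeta12 Im_zeta12)

lemma z12_val_eq_0_iff: "z12_val a = 0 \<longleftrightarrow> a = (0, 0, 0, 0)"
proof (cases a)
  case (fields a0 a1 a2 a3)
  show ?thesis
  proof
    assume "z12_val a = 0"
    then have "Re (z12_val (a0, a1, a2, a3)) = 0" "Im (z12_val (a0, a1, a2, a3)) = 0"
      by (simp_all add: fields)
    then have "of_int (2*a0 + a2) + of_int a1 * sqrt 3 = 0" "of_int (a1 + 2*a3) + of_int a2 * sqrt 3 = 0"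
      unfolding z12_val_Re_Im complex.sel by (simp_all add: field_simps)
    from this[THEN int_plus_int_sqrt3_eq_0] show "a = (0, 0, 0, 0)"
      using fields by simp
  qed (simp add: fields z12_val.simps)
qed

type_synonym z12vec = "z12 \<times> z12 \<times> z12"

fun z12_cross :: "z12vec \<Rightarrow> z12vec \<Rightarrow> z12vec" where
  "z12_cross (a1, b1, c1) (a2, b2, c2) =
     (z12_sub (z12_mul b1 c2) (z12_mul c1 b2), z12_sub (z12_mul c1 a2) (z12_mul a1 c2),
      z12_sub (z12_mul a1 b2) (z12_mul b1 a2))"

fun z12_dot :: "z12vec \<Rightarrow> z12vec \<Rightarrow> z12" where
  "z12_dot (a1, b1, c1) (a2, b2, c2) = z12_add (z12_add (z12_mul a1 a2) (z12_mul b1 b2)) (z12_mul c1 c2)"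

section \<open>Points, lines and line arrangements\<close>

lemma smult3_simp [simp]: "smult3 c (x, y, z) = (c * x, c * y, c * z)"
  by (simp add: smult3_def)

lemma incid_simp [simp]: "incid (a, b, c) (x, y, z) \<longleftrightarrow> a * x + b * y + c * z = 0"
  by (simp add: incid_def)

lemma F48_simp [simp]: "F48 (x, y, z) = x^4 + y^4 + x * z^3"
  by (simp add: F48_def)

lemma smult3_smult3 [simp]: "smult3 a (smult3 b p) = smult3 (a * b) p"
  by (cases p) (simp add: algebra_simps)

lemma smult3_one [simp]: "smult3 1 p = p"
  by (cases p) simp

lemma smult3_eq_0_iff: "smult3 c p = (0, 0, 0) \<longleftrightarrow> c = 0 \<or> p = (0, 0, 0)"
  by (cases p) auto

lemma mem_proj_class: "q \<in> proj_class p \<longleftrightarrow> (\<exists>c. c \<noteq> 0 \<and> q = smult3 c p)"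
  by (auto simp: proj_class_def)

lemma proj_class_eq_iff: "proj_class q = proj_class p \<longleftrightarrow> (\<exists>c. c \<noteq> 0 \<and> q = smult3 c p)"
proof
  assume "proj_class q = proj_class p"
  moreover have "q \<in> proj_class q" unfolding mem_proj_class by (intro exI[of _ 1]) simp
  ultimately show "\<exists>c. c \<noteq> 0 \<and> q = smult3 c p" by (simp add: mem_proj_class)
next
  assume "\<exists>c. c \<noteq> 0 \<and> q = smult3 c p"
  then obtain c where c: "c \<noteq> 0" "q = smult3 c p" by blast
  have "smult3 d q = smult3 (d * c) p" "smult3 d p = smult3 (d / c) q" for d
    using c by simp_all
  then show "proj_class q = proj_class p"
    unfolding proj_class_def using c(1) by (auto; metis divide_eq_0_iff mult_eq_0_iff)
qed

lemma proj_class_in_P2: "p \<noteq> (0, 0, 0) \<Longrightarrow> proj_class p \<in> P2"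
  unfolding P2_def by blast

lemma P2_cases: "P \<in> P2 \<Longrightarrow> (\<And>p. P = proj_class p \<Longrightarrow> p \<noteq> (0, 0, 0) \<Longrightarrow> thesis) \<Longrightarrow> thesis"
  unfolding P2_def by blast

lemma incid_smult3_point: "incid l (smult3 c p) \<longleftrightarrow> c = 0 \<or> incid l p"
proof -
  obtain a b d x y z where "l = (a, b, d)" "p = (x, y, z)" by (cases l; cases p) auto
  moreover have "a * (c * x) + b * (c * y) + d * (c * z) = c * (a * x + b * y + d * z)"
    by (simp add: algebra_simps)
  ultimately show ?thesis by simp
qed

lemma incid_smult3_line: "incid (smult3 c l) p \<longleftrightarrow> c = 0 \<or> incid l p"
proof -
  obtain a b d x y z where "l = (a, b, d)" "p = (x, y, z)" by (cases l; cases p) auto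
  moreover have "(c * a) * x + (c * b) * y + (c * d) * z = c * (a * x + b * y + d * z)"
    by (simp add: algebra_simps)
  ultimately show ?thesis by simp
qed

lemma incid_proj_class: "(\<exists>l\<in>proj_class m. \<exists>q\<in>proj_class p. incid l q) \<longleftrightarrow> incid m p"
proof
  assume "\<exists>l\<in>proj_class m. \<exists>q\<in>proj_class p. incid l q"
  then obtain l q where "l \<in> proj_class m" "q \<in> proj_class p" "incid l q" by blast
  then obtain c d where "c \<noteq> 0" "d \<noteq> 0" "incid (smult3 c m) (smult3 d p)"
    unfolding mem_proj_class by blast
  then show "incid m p" by (simp add: incid_smult3_point incid_smult3_line)
next
  assume "incid m p"
  moreover have "m \<in> proj_class m" "p \<in> proj_class p"
    unfolding mem_proj_class by (metis smult3_one one_neq_zero)+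
  ultimately show "\<exists>l\<in>proj_class m. \<exists>q\<in>proj_class p. incid l q" by blast
qed

definition cross :: "pt3 \<Rightarrow> pt3 \<Rightarrow> pt3" where
  "cross l m = (case l of (l1, l2, l3) \<Rightarrow> case m of (m1, m2, m3) \<Rightarrow>
     (l2 * m3 - l3 * m2, l3 * m1 - l1 * m3, l1 * m2 - l2 * m1))"

lemma cross_simp [simp]:
  "cross (l1, l2, l3) (m1, m2, m3) = (l2 * m3 - l3 * m2, l3 * m1 - l1 * m3, l1 * m2 - l2 * m1)"
  by (simp add: cross_def)

lemma incid_cross: "incid l (cross l m)" "incid m (cross l m)"
  by (cases l; cases m; simp add: algebra_simps)+

lemma cross_smult3_self: "cross l (smult3 c l) = (0, 0, 0)"
  by (cases l) (simp add: algebra_simps)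

lemma cross_swap: "cross m l = smult3 (-1) (cross l m)"
  by (cases l; cases m) (simp add: algebra_simps)

lemma cross_eq_0_imp_multiple:
  assumes "cross l m = (0, 0, 0)" "l \<noteq> (0, 0, 0)" shows "\<exists>c. m = smult3 c l"
proof -
  obtain l1 l2 l3 m1 m2 m3 where l: "l = (l1, l2, l3)" and m: "m = (m1, m2, m3)" by (cases l; cases m) auto
  have e: "l2 * m3 = l3 * m2" "l3 * m1 = l1 * m3" "l1 * m2 = l2 * m1" using assms(1) l m by simp_all
  consider "l1 \<noteq> 0" | "l2 \<noteq> 0" | "l3 \<noteq> 0" using assms(2) l by auto
  then show ?thesis
  proof cases
    case 1 then show ?thesis using e l m by (intro exI[of _ "m1 / l1"]) (simp add: field_simps)
  next
    case 2 then show ?thesis using e l m by (intro exI[of _ "m2 / l2"]) (simp add: field_simps)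
  next
    case 3 then show ?thesis using e l m by (intro exI[of _ "m3 / l3"]) (simp add: field_simps)
  qed
qed

lemma det_ne_0_if_not_multiple:
  fixes u0 v0 u1 v1 :: "'a::field"
  assumes "(u0, v0) \<noteq> (0, 0)" "\<not> (\<exists>c. u1 = c * u0 \<and> v1 = c * v0)"
  shows "u0 * v1 - u1 * v0 \<noteq> 0"
proof
  assume d: "u0 * v1 - u1 * v0 = 0"
  show False
  proof (cases "u0 = 0")
    case False
    then have "u1 = (u1 / u0) * u0 \<and> v1 = (u1 / u0) * v0" using d by (simp add: field_simps)
    then show False using assms(2) by blast
  next
    case True
    then have "v0 \<noteq> 0" "u1 = 0" using assms(1) d by auto
    then have "u1 = (v1 / v0) * u0 \<and> v1 = (v1 / v0) * v0" using True by simp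
    then show False using assms(2) by blast
  qed
qed

lemma linear_form_vanishing:
  fixes a b u0 v0 u1 v1 :: "'a::field"
  assumes "a * u0 + b * v0 = 0" "a * u1 + b * v1 = 0" "u0 * v1 - u1 * v0 \<noteq> 0"
  shows "a = 0 \<and> b = 0"
proof -
  have "a * (u0 * v1 - u1 * v0) = v1 * (a * u0 + b * v0) - v0 * (a * u1 + b * v1)"
    "b * (u0 * v1 - u1 * v0) = u0 * (a * u1 + b * v1) - u1 * (a * u0 + b * v0)"
    by (simp_all add: algebra_simps)
  then show ?thesis using assms by simp
qed

lemma incid_two_lines_imp_cross:
  assumes n: "cross l m \<noteq> (0, 0, 0)" and p: "p \<noteq> (0, 0, 0)" and "incid l p" "incid m p"
  shows "proj_class p = proj_class (cross l m)"
proof -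
  obtain l1 l2 l3 m1 m2 m3 p1 p2 p3 where l: "l = (l1, l2, l3)" and m: "m = (m1, m2, m3)"
    and pp: "p = (p1, p2, p3)" by (cases l; cases m; cases p) auto
  define n1 n2 n3 where "n1 = l2 * m3 - l3 * m2" and "n2 = l3 * m1 - l1 * m3" and "n3 = l1 * m2 - l2 * m1"
  have cr: "cross l m = (n1, n2, n3)" by (simp add: l m n1_def n2_def n3_def)
  have e1: "l1 * p1 + l2 * p2 + l3 * p3 = 0" and e2: "m1 * p1 + m2 * p2 + m3 * p3 = 0"
    using assms(3,4) l m pp by simp_all
  have x1: "p2 * n3 = p3 * n2" and x2: "p3 * n1 = p1 * n3" and x3: "p1 * n2 = p2 * n1"
    unfolding n1_def n2_def n3_def using e1 e2 by algebra+
  have "\<exists>c. p = smult3 c (n1, n2, n3)"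
  proof -
    consider "n1 \<noteq> 0" | "n2 \<noteq> 0" | "n3 \<noteq> 0" using n cr by auto
    then show ?thesis
    proof cases
      case 1 then show ?thesis using x2 x3 pp by (intro exI[of _ "p1 / n1"]) (simp add: field_simps)
    next
      case 2 then show ?thesis using x1 x3 pp by (intro exI[of _ "p2 / n2"]) (simp add: field_simps)
    next
      case 3 then show ?thesis using x1 x2 pp by (intro exI[of _ "p3 / n3"]) (simp add: field_simps)
    qed
  qed
  then obtain c where "p = smult3 c (cross l m)" using cr by auto
  moreover have "c \<noteq> 0" using calculation p by (auto simp: smult3_eq_0_iff)
  ultimately show ?thesis using proj_class_eq_iff by blast
qed

definition incident :: "pt3 set \<Rightarrow> pt3 set \<Rightarrow> bool" where
  "incident L P \<longleftrightarrow> (\<exists>l\<in>L. \<exists>p\<in>P. incid l p)"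

lemma lines_through_eq: "lines_through A P = {L \<in> A. incident L P}"
  by (simp add: lines_through_def incident_def)

lemma incident_proj_class [simp]: "incident (proj_class l) (proj_class p) \<longleftrightarrow> incid l p"
  by (simp add: incident_def incid_proj_class)

lemma distinct_lines_meet:
  assumes "L \<in> P2" "M \<in> P2" "L \<noteq> M"
  shows "\<exists>P\<in>P2. incident L P \<and> incident M P"
    and "P \<in> P2 \<Longrightarrow> P' \<in> P2 \<Longrightarrow> incident L P \<Longrightarrow> incident M P \<Longrightarrow> incident L P' \<Longrightarrow> incident M P' \<Longrightarrow> P = P'"
proof -
  obtain l m where l: "L = proj_class l" "l \<noteq> (0, 0, 0)" and m: "M = proj_class m" "m \<noteq> (0, 0, 0)"
    using assms(1,2) unfolding P2_def by blast
  have cr: "cross l m \<noteq> (0, 0, 0)"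
  proof
    assume "cross l m = (0, 0, 0)"
    then obtain c where c: "m = smult3 c l" using cross_eq_0_imp_multiple l(2) by blast
    then have "c \<noteq> 0" using m(2) by (auto simp: smult3_eq_0_iff)
    then show False using assms(3) c l(1) m(1) proj_class_eq_iff by metis
  qed
  have "proj_class (cross l m) \<in> P2" using cr unfolding P2_def by blast
  then show "\<exists>P\<in>P2. incident L P \<and> incident M P"
    unfolding l(1) m(1) using incid_cross[where l = l and m = m] by (intro bexI[of _ "proj_class (cross l m)"]) simp_all
  assume P: "P \<in> P2" "P' \<in> P2" and inc: "incident L P" "incident M P" "incident L P'" "incident M P'"
  obtain p p' where p: "P = proj_class p" "p \<noteq> (0, 0, 0)" and p': "P' = proj_class p'" "p' \<noteq> (0, 0, 0)"
    using P unfolding P2_def by blast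
  have "incid l p" "incid m p" "incid l p'" "incid m p'" using inc unfolding l(1) m(1) p(1) p'(1) by simp_all
  then show "P = P'" using incid_two_lines_imp_cross[OF cr] p p' by metis
qed

lemma two_common_lines_imp_eq:
  assumes "A \<subseteq> P2" "P \<in> P2" "P' \<in> P2" "L \<noteq> M"
    and "L \<in> lines_through A P" "M \<in> lines_through A P" "L \<in> lines_through A P'" "M \<in> lines_through A P'"
  shows "P = P'"
  using assms distinct_lines_meet(2)[of L M P P'] unfolding lines_through_eq by blast

lemma card_ge_2_obtain:
  assumes "2 \<le> card S" obtains x y where "x \<in> S" "y \<in> S" "x \<noteq> y"
proof -
  have "\<not> (\<forall>x\<in>S. \<forall>y\<in>S. x = y)"
    using assms card_le_Suc0_iff_eq[of S] card.infinite[of S] by fastforce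
  then show thesis using that by blast
qed

lemma finite_multiple_points:
  assumes "finite A" "A \<subseteq> P2"
  shows "finite {P \<in> P2. 2 \<le> card (lines_through A P)}" (is "finite ?Pts")
proof (rule finite_imageD)
  show "finite (lines_through A ` ?Pts)"
    by (rule finite_subset[of _ "Pow A"]) (use assms(1) in \<open>auto simp: lines_through_def\<close>)
  show "inj_on (lines_through A) ?Pts"
  proof (rule inj_onI)
    fix P P' assume P: "P \<in> ?Pts" and P': "P' \<in> ?Pts" and eq: "lines_through A P = lines_through A P'"
    from P have "2 \<le> card (lines_through A P)" by simp
    then obtain L M where "L \<in> lines_through A P" "M \<in> lines_through A P" "L \<noteq> M"
      by (rule card_ge_2_obtain)
    then show "P = P'" using two_common_lines_imp_eq[OF assms(2)] P P' eq by auto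
  qed
qed

text \<open>Double counting: every pair of lines meets in exactly one point \<open>P\<close>, and \<open>P\<close> absorbs
  \<open>t\<^sub>P choose 2\<close> of the pairs.\<close>
theorem arrangement_count_pairs:
  assumes "finite A" "A \<subseteq> P2"
  shows "(\<Sum>P\<in>{P \<in> P2. 2 \<le> card (lines_through A P)}. card (lines_through A P) choose 2) = card A choose 2"
proof -
  let ?T = "lines_through A" and ?Pts = "{P \<in> P2. 2 \<le> card (lines_through A P)}"
  let ?pairs = "\<lambda>S. {s. s \<subseteq> S \<and> card s = 2}"
  have T_sub: "?T P \<subseteq> A" for P by (auto simp: lines_through_def)
  have fin_T: "finite (?T P)" for P using finite_subset[OF T_sub assms(1)] .
  have decomp: "?pairs A = (\<Union>P\<in>?Pts. ?pairs (?T P))"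
  proof
    show "?pairs A \<subseteq> (\<Union>P\<in>?Pts. ?pairs (?T P))"
    proof
      fix s assume s: "s \<in> ?pairs A"
      then obtain L M where LM: "s = {L, M}" "L \<noteq> M" by (auto simp: card_2_iff)
      have "L \<in> A" "M \<in> A" using s LM by auto
      then obtain P where P: "P \<in> P2" "incident L P" "incident M P"
        using distinct_lines_meet(1)[of L M] assms(2) LM(2) by blast
      have "s \<subseteq> ?T P" using P \<open>L \<in> A\<close> \<open>M \<in> A\<close> unfolding LM(1) lines_through_eq by blast
      moreover from this have "2 \<le> card (?T P)" using card_mono[OF fin_T, of s P] s by simp
      ultimately show "s \<in> (\<Union>P\<in>?Pts. ?pairs (?T P))" using P(1) s by blast
    qed
    show "(\<Union>P\<in>?Pts. ?pairs (?T P)) \<subseteq> ?pairs A"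
    proof
      fix s assume "s \<in> (\<Union>P\<in>?Pts. ?pairs (?T P))"
      then obtain P where "s \<subseteq> ?T P" "card s = 2" by blast
      then show "s \<in> ?pairs A" using T_sub[of P] by simp
    qed
  qed
  have disj: "?pairs (?T P) \<inter> ?pairs (?T P') = {}" if "P \<in> ?Pts" "P' \<in> ?Pts" "P \<noteq> P'" for P P'
  proof (rule ccontr)
    assume "?pairs (?T P) \<inter> ?pairs (?T P') \<noteq> {}"
    then obtain s where s: "s \<subseteq> ?T P" "s \<subseteq> ?T P'" "card s = 2" by blast
    then obtain L M where LM: "s = {L, M}" "L \<noteq> M" by (auto simp: card_2_iff)
    have "P \<in> P2" "P' \<in> P2" using that(1,2) by simp_all
    then have "P = P'" using two_common_lines_imp_eq[OF assms(2) _ _ LM(2)] s unfolding LM(1) by blast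
    then show False using that(3) by simp
  qed
  have "card (\<Union>P\<in>?Pts. ?pairs (?T P)) = (\<Sum>P\<in>?Pts. card (?pairs (?T P)))"
  proof (rule card_UN_disjoint[OF finite_multiple_points[OF assms]])
    show "\<forall>P\<in>?Pts. finite (?pairs (?T P))" using fin_T by simp
    show "\<forall>P\<in>?Pts. \<forall>P'\<in>?Pts. P \<noteq> P' \<longrightarrow> ?pairs (?T P) \<inter> ?pairs (?T P') = {}"
      using disj by blast
  qed
  then show ?thesis unfolding decomp[symmetric] n_subsets[OF assms(1)] n_subsets[OF fin_T] by (rule sym)
qed

lemma sum_choose_2_by_multiplicity:
  fixes t :: "'a \<Rightarrow> nat"
  assumes fin: "finite {P \<in> S. 2 \<le> t P}" and le4: "\<forall>P\<in>S. t P \<le> 4"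
  shows "(\<Sum>P\<in>{P \<in> S. 2 \<le> t P}. t P choose 2) =
    card {P \<in> S. t P = 2} + 3 * card {P \<in> S. t P = 3} + 6 * card {P \<in> S. t P = 4}"
proof -
  let ?N = "\<lambda>k. {P \<in> S. t P = k}"
  have split: "{P \<in> S. 2 \<le> t P} = ?N 2 \<union> ?N 3 \<union> ?N 4" using le4 by fastforce
  have fin_N: "finite (?N k)" if "2 \<le> k" for k by (rule finite_subset[OF _ fin]) (use that in auto)
  have "(\<Sum>P\<in>?N k. t P choose 2) = (k choose 2) * card (?N k)" for k by simp
  then show ?thesis unfolding split
    by (subst sum.union_disjoint; (use fin_N in auto)?)+ (simp add: numeral_eq_Suc)
qed

section \<open>Intersection multiplicities with \<open>C48\<close>\<close>

lemma poly_restr48: "poly (restr48 (x0, y0, z0) (x1, y1, z1)) t = F48 (x0 + t * x1, y0 + t * y1, z0 + t * z1)"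
  by (simp add: restr48_def algebra_simps)

lemma restr48_coeffs: "restr48 (x0, y0, z0) (x1, y1, z1) =
  [: x0^4 + y0^4 + x0*z0^3,
     4*x0^3*x1 + 4*y0^3*y1 + x1*z0^3 + 3*x0*z0^2*z1,
     6*x0^2*x1^2 + 6*y0^2*y1^2 + 3*x0*z0*z1^2 + 3*x1*z0^2*z1,
     4*x0*x1^3 + 4*y0*y1^3 + x0*z1^3 + 3*x1*z0*z1^2,
     x1^4 + y1^4 + x1*z1^3 :]"
  by (rule poly_eq_poly_eq_iff[THEN iffD1], rule ext, unfold poly_restr48)
    (simp add: algebra_simps power2_eq_square power3_eq_cube power4_eq_xxxx)

text \<open>The polar \<open>\<nabla>F48(p) \<cdot> q\<close>, i.e. the linear coefficient of \<open>F48 (p + t q)\<close>.\<close>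
definition polar48 :: "pt3 \<Rightarrow> pt3 \<Rightarrow> complex" where
  "polar48 p q = (case p of (x0, y0, z0) \<Rightarrow> case q of (x1, y1, z1) \<Rightarrow>
     4*x0^3*x1 + 4*y0^3*y1 + x1*z0^3 + 3*x0*z0^2*z1)"

lemma coeff_restr48: "coeff (restr48 p q) 0 = F48 p" "coeff (restr48 p q) 1 = polar48 p q"
  by (cases p; cases q; simp add: restr48_coeffs polar48_def)+

lemma not_both_multiples:
  assumes "u \<noteq> (0, 0, 0)" "\<not> (\<exists>c. v = smult3 c u)"
  shows "\<not> (\<exists>c. u = smult3 c p) \<or> \<not> (\<exists>c. v = smult3 c p)"
proof (rule ccontr)
  assume "\<not> ?thesis"
  then obtain c d where cd: "u = smult3 c p" "v = smult3 d p" by blast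
  then have "c \<noteq> 0" using assms(1) by (auto simp: smult3_eq_0_iff)
  then have "v = smult3 (d / c) u" using cd by simp
  then show False using assms(2) by blast
qed

lemma exists_point_on_line_not_multiple:
  assumes "l \<noteq> (0, 0, 0)" shows "\<exists>q. incid l q \<and> \<not> (\<exists>c. q = smult3 c p)"
proof -
  obtain a b c where l: "l = (a, b, c)" by (cases l) auto
  have "\<exists>u v. incid l u \<and> incid l v \<and> u \<noteq> (0, 0, 0) \<and> \<not> (\<exists>k. v = smult3 k u)"
  proof (cases "a = 0")
    case False
    show ?thesis using False l
      by (intro exI[of _ "(b, -a, 0)"] exI[of _ "(c, 0, -a)"]) (auto simp: algebra_simps)
  next
    case a: True
    show ?thesis
    proof (cases "b = 0")
      case False
      show ?thesis using a False l by (intro exI[of _ "(1, 0, 0)"] exI[of _ "(0, c, -b)"]) auto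
    next
      case True
      show ?thesis using a True l by (intro exI[of _ "(1, 0, 0)"] exI[of _ "(0, 1, 0)"]) auto
    qed
  qed
  then show ?thesis using not_both_multiples by blast
qed

definition other_point :: "pt3 \<Rightarrow> pt3 \<Rightarrow> pt3" where
  "other_point l p = (SOME q. incid l q \<and> \<not> (\<exists>c. q = smult3 c p))"

lemma other_point:
  assumes "l \<noteq> (0, 0, 0)"
  shows "incid l (other_point l p)" "\<not> (\<exists>c. other_point l p = smult3 c p)"
  using someI_ex[OF exists_point_on_line_not_multiple[OF assms]] by (simp_all add: other_point_def)

lemma int_mult_other_point: "int_mult l p = order 0 (restr48 p (other_point l p))"
  by (simp add: int_mult_def other_point_def)

lemma int_mult_ge_2_imp_tangent:
  assumes "l \<noteq> (0, 0, 0)" "2 \<le> int_mult l p"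
  shows "\<exists>q. incid l q \<and> \<not> (\<exists>c. q = smult3 c p) \<and> F48 p = 0 \<and> polar48 p q = 0"
proof -
  let ?q = "other_point l p"
  have "[:-0, 1:]^2 dvd restr48 p ?q"
    using assms(2) order_divides[of 0 2 "restr48 p ?q"] by (simp add: int_mult_other_point)
  then have "monom 1 2 dvd restr48 p ?q" by (simp add: monom_altdef)
  then have "coeff (restr48 p ?q) 0 = 0" "coeff (restr48 p ?q) 1 = 0"
    by (simp_all add: monom_1_dvd_iff')
  then show ?thesis using other_point[OF assms(1)] coeff_restr48 by metis
qed

lemma int_mult_ge_2I:
  assumes "l \<noteq> (0, 0, 0)"
    and "\<And>q. incid l q \<Longrightarrow> \<not> (\<exists>c. q = smult3 c p) \<Longrightarrow> restr48 p q \<noteq> 0 \<and> monom 1 2 dvd restr48 p q"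
  shows "2 \<le> int_mult l p"
  using assms(2)[OF other_point[OF assms(1)]] monom_1_dvd_iff unfolding int_mult_other_point by blast

lemma int_mult_eq_4I:
  assumes "l \<noteq> (0, 0, 0)"
    and "\<And>q. incid l q \<Longrightarrow> \<not> (\<exists>c. q = smult3 c p) \<Longrightarrow> \<exists>c. c \<noteq> 0 \<and> restr48 p q = monom c 4"
  shows "int_mult l p = 4"
  using assms(2)[OF other_point[OF assms(1)]] by (auto simp: int_mult_other_point)

lemma int_mult_smult3_line: "c \<noteq> 0 \<Longrightarrow> int_mult (smult3 c l) = int_mult l"
  by (simp add: int_mult_def incid_smult3_line fun_eq_iff)

lemma bitangent48_smult3: "c \<noteq> 0 \<Longrightarrow> bitangent48 (smult3 c l) \<longleftrightarrow> bitangent48 l"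
  by (simp add: bitangent48_def int_mult_smult3_line incid_smult3_line smult3_eq_0_iff)

lemma bitangent48E:
  assumes "bitangent48 l"
  obtains (ordinary) p1 p2 where "p1 \<noteq> (0, 0, 0)" "p2 \<noteq> (0, 0, 0)" "incid l p1" "incid l p2"
    "proj_class p1 \<noteq> proj_class p2" "2 \<le> int_mult l p1" "2 \<le> int_mult l p2"
  | (hyperflex) p where "p \<noteq> (0, 0, 0)" "incid l p" "int_mult l p = 4"
    "\<forall>p'. p' \<noteq> (0, 0, 0) \<and> incid l p' \<and> F48 p' = 0 \<longrightarrow> proj_class p' = proj_class p"
  using assms unfolding bitangent48_def by blast

section \<open>Classification of the bitangents\<close>

definition line_quartic :: "complex \<Rightarrow> complex \<Rightarrow> complex \<Rightarrow> complex" where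
  "line_quartic \<alpha> \<beta> t = t^4 + \<beta>^3*t^3 + 3*\<alpha>*\<beta>^2*t^2 + 3*\<alpha>^2*\<beta>*t + (1 + \<alpha>^3)"

definition line_quartic_deriv :: "complex \<Rightarrow> complex \<Rightarrow> complex \<Rightarrow> complex" where
  "line_quartic_deriv \<alpha> \<beta> t = 4*t^3 + 3*\<beta>^3*t^2 + 6*\<alpha>*\<beta>^2*t + 3*\<alpha>^2*\<beta>"

lemma F48_on_line: "F48 (1, t, \<alpha> + \<beta> * t) = line_quartic \<alpha> \<beta> t"
  by (simp add: line_quartic_def power2_eq_square power3_eq_cube power4_eq_xxxx algebra_simps)

lemma tangency_on_line:
  assumes p: "p = (x0, y0, z0)" "p \<noteq> (0, 0, 0)" and ip: "incid (\<alpha>, \<beta>, -1) p"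
    and m: "2 \<le> int_mult (\<alpha>, \<beta>, -1) p"
  shows "x0 \<noteq> 0 \<and> line_quartic \<alpha> \<beta> (y0 / x0) = 0 \<and> line_quartic_deriv \<alpha> \<beta> (y0 / x0) = 0"
proof -
  obtain q where iq: "incid (\<alpha>, \<beta>, -1) q" and nq: "\<not> (\<exists>c. q = smult3 c p)"
    and F: "F48 p = 0" and C1: "polar48 p q = 0"
    using int_mult_ge_2_imp_tangent[OF _ m] by auto
  obtain x1 y1 z1 where q: "q = (x1, y1, z1)" by (cases q) auto
  have z0: "z0 = \<alpha> * x0 + \<beta> * y0" and z1: "z1 = \<alpha> * x1 + \<beta> * y1"
    using ip iq p q by simp_all
  define gx where "gx = 4 * x0^3 + z0^3 + 3 * \<alpha> * x0 * z0^2"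
  define gy where "gy = 4 * y0^3 + 3 * \<beta> * x0 * z0^2"
  have e1: "gx * x1 + gy * y1 = 0"
    using C1 unfolding polar48_def p q gx_def gy_def z1 by (simp add: algebra_simps)
  have "4 * F48 p = gx * x0 + gy * y0"
    unfolding p gx_def gy_def F48_simp z0 by (simp add: algebra_simps power2_eq_square power3_eq_cube power4_eq_xxxx)
  then have e2: "gx * x0 + gy * y0 = 0" using F by simp
  have "(x0, y0) \<noteq> (0, 0)" using p z0 by auto
  moreover have "\<not> (\<exists>c. x1 = c * x0 \<and> y1 = c * y0)" using nq by (auto simp: p q z0 z1 algebra_simps)
  ultimately have "gx = 0 \<and> gy = 0" using e1 e2 by (intro linear_form_vanishing det_ne_0_if_not_multiple)
  then have gy0: "gy = 0" by simp
  have x0: "x0 \<noteq> 0"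
  proof
    assume x0: "x0 = 0"
    then have "y0 = 0" using F p by simp
    then show False using x0 p z0 by simp
  qed
  have "x0^4 * line_quartic \<alpha> \<beta> (y0 / x0) = F48 p"
    unfolding p F48_simp z0 line_quartic_def using x0
    by (simp add: field_simps power2_eq_square power3_eq_cube power4_eq_xxxx)
  moreover have "x0^3 * line_quartic_deriv \<alpha> \<beta> (y0 / x0) = gy"
    unfolding gy_def z0 line_quartic_deriv_def using x0 by (simp add: field_simps power2_eq_square power3_eq_cube)
  ultimately show ?thesis using F gy0 x0 by simp
qed

text \<open>Comparison of coefficients in \<open>line_quartic \<alpha> \<beta> t = (t\<^sup>2 - \<sigma> t + \<pi>)\<^sup>2\<close>.\<close>
definition quartic_is_square :: "complex \<Rightarrow> complex \<Rightarrow> complex \<Rightarrow> complex \<Rightarrow> bool" where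
  "quartic_is_square \<alpha> \<beta> \<sigma> \<pi> \<longleftrightarrow>
     \<beta>^3 = -2*\<sigma> \<and> 3*\<alpha>*\<beta>^2 = \<sigma>^2 + 2*\<pi> \<and> 3*\<alpha>^2*\<beta> = -2*\<sigma>*\<pi> \<and> 1 + \<alpha>^3 = \<pi>^2"

lemma two_double_roots_imp_square:
  assumes h1: "line_quartic \<alpha> \<beta> t1 = 0" "line_quartic_deriv \<alpha> \<beta> t1 = 0"
    and h2: "line_quartic \<alpha> \<beta> t2 = 0" "line_quartic_deriv \<alpha> \<beta> t2 = 0" and ne: "t1 \<noteq> t2"
  shows "quartic_is_square \<alpha> \<beta> (t1 + t2) (t1 * t2)"
proof -
  define \<sigma> \<pi> where "\<sigma> = t1 + t2" and "\<pi> = t1 * t2"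
  define d3 d2 d1 d0 where "d3 = \<beta>^3 + 2*\<sigma>" and "d2 = 3*\<alpha>*\<beta>^2 - \<sigma>^2 - 2*\<pi>"
    and "d1 = 3*\<alpha>^2*\<beta> + 2*\<sigma>*\<pi>" and "d0 = 1 + \<alpha>^3 - \<pi>^2"
  text \<open>The remainder \<open>r(t) = d3 t\<^sup>3 + d2 t\<^sup>2 + d1 t + d0\<close> of the quartic modulo \<open>(t - t1)\<^sup>2 (t - t2)\<^sup>2\<close>
    has double roots at \<open>t1 \<noteq> t2\<close>, hence vanishes.\<close>
  have D: "line_quartic \<alpha> \<beta> t = (t-t1)^2*(t-t2)^2 + d3*t^3 + d2*t^2 + d1*t + d0" for t
    unfolding line_quartic_def d3_def d2_def d1_def d0_def \<sigma>_def \<pi>_def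
    by (simp add: algebra_simps power2_eq_square power3_eq_cube power4_eq_xxxx)
  have D': "line_quartic_deriv \<alpha> \<beta> t = 2*(t-t1)*(t-t2)^2 + 2*(t-t1)^2*(t-t2) + 3*d3*t^2 + 2*d2*t + d1" for t
    unfolding line_quartic_deriv_def d3_def d2_def d1_def \<sigma>_def \<pi>_def
    by (simp add: algebra_simps power2_eq_square power3_eq_cube)
  have a1: "d3*t1^3 + d2*t1^2 + d1*t1 + d0 = 0" and a2: "3*d3*t1^2 + 2*d2*t1 + d1 = 0"
    and a3: "d3*t2^3 + d2*t2^2 + d1*t2 + d0 = 0" and a4: "3*d3*t2^2 + 2*d2*t2 + d1 = 0"
    using D[of t1] D'[of t1] D[of t2] D'[of t2] h1 h2 by simp_all
  define \<delta> e where "\<delta> = t2 - t1" and "e = 3*d3*t1 + d2"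
  have \<delta>: "\<delta> \<noteq> 0" using ne \<delta>_def by simp
  have "d3*t2^3 + d2*t2^2 + d1*t2 + d0 = (d3*t1^3 + d2*t1^2 + d1*t1 + d0) + (3*d3*t1^2 + 2*d2*t1 + d1)*\<delta> + e*\<delta>^2 + d3*\<delta>^3"
    unfolding e_def \<delta>_def by (simp add: algebra_simps power2_eq_square power3_eq_cube)
  then have "e*\<delta>^2 + d3*\<delta>^3 = 0" unfolding a1 a2 a3 by simp
  then have "\<delta>^2 * (e + d3*\<delta>) = 0" by (simp add: algebra_simps power2_eq_square power3_eq_cube)
  then have c1: "e + d3*\<delta> = 0" using \<delta> by simp
  have "3*d3*t2^2 + 2*d2*t2 + d1 = (3*d3*t1^2 + 2*d2*t1 + d1) + 2*e*\<delta> + 3*d3*\<delta>^2"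
    unfolding e_def \<delta>_def by (simp add: algebra_simps power2_eq_square)
  then have "2*e*\<delta> + 3*d3*\<delta>^2 = 0" unfolding a2 a4 by simp
  then have "\<delta> * (2*e + 3*d3*\<delta>) = 0" by (simp add: algebra_simps power2_eq_square)
  then have c2: "2*e + 3*d3*\<delta> = 0" using \<delta> by simp
  have "d3 * \<delta> = (2*e + 3*d3*\<delta>) - 2*(e + d3*\<delta>)" by (simp add: algebra_simps)
  then have "d3 * \<delta> = 0" using c1 c2 by simp
  then have "d3 = 0" using \<delta> by simp
  moreover from this have "d2 = 0" using c1 e_def by simp
  moreover from calculation have "d1 = 0" using a2 by simp
  moreover from calculation have "d0 = 0" using a1 by simp
  ultimately show ?thesis
    unfolding quartic_is_square_def d3_def d2_def d1_def d0_def \<sigma>_def \<pi>_def by algebra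
qed

lemma quartic_is_square_beta_ne_0:
  assumes "quartic_is_square \<alpha> \<beta> \<sigma> \<pi>" "\<sigma>^2 \<noteq> 4 * \<pi>" shows "\<beta> \<noteq> 0"
proof
  assume "\<beta> = 0"
  moreover have "\<beta>^3 = -2*\<sigma>" "3*\<alpha>*\<beta>^2 = \<sigma>^2 + 2*\<pi>"
    using assms(1) by (simp_all add: quartic_is_square_def)
  ultimately show False using assms(2) by simp
qed

lemma ordinary_bitangent_on_line_imp_square:
  assumes "p1 \<noteq> (0, 0, 0)" "p2 \<noteq> (0, 0, 0)" "incid (\<alpha>, \<beta>, -1) p1" "incid (\<alpha>, \<beta>, -1) p2"
    and "proj_class p1 \<noteq> proj_class p2"
    and "2 \<le> int_mult (\<alpha>, \<beta>, -1) p1" "2 \<le> int_mult (\<alpha>, \<beta>, -1) p2"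
  shows "\<exists>\<sigma> \<pi>. quartic_is_square \<alpha> \<beta> \<sigma> \<pi> \<and> \<sigma>^2 \<noteq> 4 * \<pi>"
proof -
  obtain x1 y1 z1 x2 y2 z2 where p1: "p1 = (x1, y1, z1)" and p2: "p2 = (x2, y2, z2)"
    by (cases p1; cases p2) auto
  define t1 t2 where "t1 = y1 / x1" and "t2 = y2 / x2"
  have t1: "x1 \<noteq> 0" "line_quartic \<alpha> \<beta> t1 = 0" "line_quartic_deriv \<alpha> \<beta> t1 = 0"
    using tangency_on_line[OF p1 assms(1,3,6)] t1_def by auto
  have t2: "x2 \<noteq> 0" "line_quartic \<alpha> \<beta> t2 = 0" "line_quartic_deriv \<alpha> \<beta> t2 = 0"
    using tangency_on_line[OF p2 assms(2,4,7)] t2_def by auto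
  have ne: "t1 \<noteq> t2"
  proof
    assume "t1 = t2"
    then have "y2 = (x2 / x1) * y1" using t1 t2 by (simp add: t1_def t2_def field_simps)
    moreover have "z1 = \<alpha> * x1 + \<beta> * y1" "z2 = \<alpha> * x2 + \<beta> * y2" using assms(3,4) p1 p2 by simp_all
    ultimately have "p2 = smult3 (x2 / x1) p1" using p1 p2 t1 by (simp add: field_simps)
    then have "proj_class p2 = proj_class p1"
      unfolding proj_class_eq_iff using t1(1) t2(1) by (intro exI[of _ "x2 / x1"]) simp
    then show False using assms(5) by simp
  qed
  have "(t1 + t2)^2 - 4 * (t1 * t2) = (t1 - t2)^2" by (simp add: power2_eq_square algebra_simps)
  then have "(t1 + t2)^2 \<noteq> 4 * (t1 * t2)" using ne by auto
  then show ?thesis using two_double_roots_imp_square[OF t1(2,3) t2(2,3) ne] by blast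
qed

lemma hyperflex_on_line:
  assumes "p \<noteq> (0, 0, 0)" "incid (\<alpha>, \<beta>, -1) p" "int_mult (\<alpha>, \<beta>, -1) p = 4"
    and unique: "\<forall>p'. p' \<noteq> (0, 0, 0) \<and> incid (\<alpha>, \<beta>, -1) p' \<and> F48 p' = 0 \<longrightarrow> proj_class p' = proj_class p"
  shows "\<beta> = 0 \<and> \<alpha>^3 = -1"
proof -
  obtain x0 y0 z0 where p: "p = (x0, y0, z0)" by (cases p) auto
  define t0 where "t0 = y0 / x0"
  have t: "x0 \<noteq> 0" "line_quartic \<alpha> \<beta> t0 = 0" "line_quartic_deriv \<alpha> \<beta> t0 = 0"
    using tangency_on_line[OF p assms(1,2)] assms(3) t0_def by auto
  define e1 e0 where "e1 = \<beta>^3 + 2*t0" and "e0 = 3*\<alpha>*\<beta>^2 + 2*t0*e1 - t0^2"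
  have fac: "line_quartic \<alpha> \<beta> t = (t - t0)^2 * (t^2 + e1*t + e0)
      + line_quartic \<alpha> \<beta> t0 + line_quartic_deriv \<alpha> \<beta> t0 * (t - t0)" for t
    unfolding line_quartic_def line_quartic_deriv_def e1_def e0_def by algebra
  text \<open>Every root of the quartic is a point of \<open>C48\<close> on the line, hence equals \<open>t0\<close>.\<close>
  have root_eq: "s = t0" if s: "s^2 + e1*s + e0 = 0" for s
  proof -
    have "line_quartic \<alpha> \<beta> s = 0" using fac[of s] s t by simp
    then have "F48 (1, s, \<alpha> + \<beta> * s) = 0" by (simp only: F48_on_line)
    then have "proj_class (1, s, \<alpha> + \<beta> * s) = proj_class p"
      using unique[rule_format, of "(1, s, \<alpha> + \<beta> * s)"] by simp
    then obtain k where "p = smult3 k (1, s, \<alpha> + \<beta> * s)" using proj_class_eq_iff by metis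
    then show "s = t0" using p t(1) t0_def by simp
  qed
  define d where "d = csqrt (e1^2 - 4*e0)"
  have quad: "4 * (s^2 + e1*s + e0) = (2*s + e1)^2 - d^2" for s
    unfolding d_def power2_csqrt by (simp add: power2_eq_square algebra_simps)
  have root: "s^2 + e1*s + e0 = 0" if "(2*s + e1)^2 = d^2" for s
  proof -
    have "4 * (s^2 + e1*s + e0) = 0" using quad[of s] that by simp
    then show ?thesis by (simp only: mult_eq_0_iff) simp
  qed
  have "(d - e1) / 2 = t0" "(- d - e1) / 2 = t0"
    by (rule root_eq, rule root, simp add: field_simps)+
  then have "d - e1 = 2 * t0" "- d - e1 = 2 * t0" by (simp_all add: field_simps)
  then have ee1: "e1 = -2*t0" and "d = 0" by algebra+
  then have ee0: "e0 = t0^2" using quad[of 0] by (simp add: power2_eq_square)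
  have c3: "\<beta>^3 = -4*t0" using ee1 e1_def by algebra
  have c2: "3*\<alpha>*\<beta>^2 = 6*t0^2" using ee0 ee1 e0_def by algebra
  have c1: "3*\<alpha>^2*\<beta> = -4*t0^3" using t(3) c3 c2 unfolding line_quartic_deriv_def by algebra
  have c0: "1 + \<alpha>^3 = t0^4" using t(2) c3 c2 c1 unfolding line_quartic_def by algebra
  have "t0^4 = 0" using c3 c2 c1 by algebra
  then have "t0 = 0" by simp
  then show ?thesis using c3 c0 by (simp add: eq_neg_iff_add_eq_0 add.commute)
qed

lemma F48_on_line_square:
  assumes "quartic_is_square \<alpha> \<beta> \<sigma> \<pi>"
  shows "F48 (X, Y, \<alpha> * X + \<beta> * Y) = (Y^2 - \<sigma> * X * Y + \<pi> * X^2)^2"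
proof -
  have sq: "\<beta>^3 = -2*\<sigma>" "3*\<alpha>*\<beta>^2 = \<sigma>^2 + 2*\<pi>" "3*\<alpha>^2*\<beta> = -2*\<sigma>*\<pi>" "1 + \<alpha>^3 = \<pi>^2"
    using assms by (simp_all add: quartic_is_square_def)
  have "F48 (X, Y, \<alpha> * X + \<beta> * Y) =
      (1 + \<alpha>^3)*X^4 + 3*\<alpha>^2*\<beta>*X^3*Y + 3*\<alpha>*\<beta>^2*X^2*Y^2 + \<beta>^3*X*Y^3 + Y^4"
    by (simp add: power2_eq_square power3_eq_cube power4_eq_xxxx algebra_simps)
  also have "\<dots> = \<pi>^2*X^4 + (-2*\<sigma>*\<pi>)*X^3*Y + (\<sigma>^2 + 2*\<pi>)*X^2*Y^2 + (-2*\<sigma>)*X*Y^3 + Y^4"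
    by (simp only: sq)
  also have "\<dots> = (Y^2 - \<sigma> * X * Y + \<pi> * X^2)^2"
    by (simp add: power2_eq_square power3_eq_cube power4_eq_xxxx algebra_simps)
  finally show ?thesis .
qed

lemma double_point_on_line:
  assumes sq: "quartic_is_square \<alpha> \<beta> \<sigma> \<pi>" and root: "t^2 - \<sigma> * t + \<pi> = 0" and ne: "\<sigma> \<noteq> 2 * t"
  shows "2 \<le> int_mult (\<alpha>, \<beta>, -1) (1, t, \<alpha> + \<beta> * t)"
proof (rule int_mult_ge_2I)
  fix q assume iq: "incid (\<alpha>, \<beta>, -1) q" and nq: "\<not> (\<exists>c. q = smult3 c (1, t, \<alpha> + \<beta> * t))"
  obtain x1 y1 z1 where q: "q = (x1, y1, z1)" by (cases q) auto
  have z1: "z1 = \<alpha> * x1 + \<beta> * y1" using iq q by simp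
  define t' where "t' = \<sigma> - t"
  have ne1: "y1 - t * x1 \<noteq> 0"
  proof
    assume "y1 - t * x1 = 0"
    then have "q = smult3 x1 (1, t, \<alpha> + \<beta> * t)" using q z1 by (simp add: algebra_simps)
    then show False using nq by blast
  qed
  define Q where "Q = [:t - t', y1 - t' * x1:]"
  have "Q \<noteq> 0" using ne by (simp add: Q_def t'_def)
  then have nz: "monom 1 2 * ([:(y1 - t * x1)^2:] * Q^2) \<noteq> 0" using ne1 by (simp add: monom_eq_0_iff)
  have fac: "Y^2 - \<sigma> * X * Y + \<pi> * X^2 = (Y - t * X) * (Y - t' * X)" for X Y
    using root unfolding t'_def by algebra
  have "poly (restr48 (1, t, \<alpha> + \<beta> * t) q) s = poly (monom 1 2 * ([:(y1 - t * x1)^2:] * Q^2)) s" for s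
  proof -
    have "poly (restr48 (1, t, \<alpha> + \<beta> * t) q) s = F48 (1 + s*x1, t + s*y1, \<alpha> * (1 + s*x1) + \<beta> * (t + s*y1))"
      unfolding q poly_restr48 z1 by (simp add: algebra_simps)
    also have "\<dots> = ((t + s*y1) - t * (1 + s*x1))^2 * ((t + s*y1) - t' * (1 + s*x1))^2"
      unfolding F48_on_line_square[OF sq] fac by (simp add: power_mult_distrib)
    also have "\<dots> = poly (monom 1 2 * ([:(y1 - t * x1)^2:] * Q^2)) s"
      unfolding Q_def by (simp add: poly_monom algebra_simps power2_eq_square)
    finally show ?thesis .
  qed
  then have eq: "restr48 (1, t, \<alpha> + \<beta> * t) q = monom 1 2 * ([:(y1 - t * x1)^2:] * Q^2)"
    by (intro poly_eq_poly_eq_iff[THEN iffD1]) auto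
  show "restr48 (1, t, \<alpha> + \<beta> * t) q \<noteq> 0 \<and> monom 1 2 dvd restr48 (1, t, \<alpha> + \<beta> * t) q"
    unfolding eq by (intro conjI nz dvd_triv_left)
qed simp

lemma square_imp_bitangent:
  assumes sq: "quartic_is_square \<alpha> \<beta> \<sigma> \<pi>" and disc: "\<sigma>^2 \<noteq> 4 * \<pi>"
  shows "bitangent48 (\<alpha>, \<beta>, -1)"
proof -
  define d where "d = csqrt (\<sigma>^2 - 4*\<pi>)"
  have d2: "d^2 = \<sigma>^2 - 4*\<pi>" unfolding d_def by simp
  have d: "d \<noteq> 0" using d2 disc by auto
  define t1 t2 where "t1 = (\<sigma> + d) / 2" and "t2 = (\<sigma> - d) / 2"
  have quad: "4 * (t^2 - \<sigma> * t + \<pi>) = (2*t - \<sigma>)^2 - d^2" for t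
    unfolding d2 by (simp add: power2_eq_square algebra_simps)
  have root: "t^2 - \<sigma> * t + \<pi> = 0" if "(2*t - \<sigma>)^2 = d^2" for t
  proof -
    have "4 * (t^2 - \<sigma> * t + \<pi>) = 0" using quad[of t] that by simp
    then show ?thesis by (simp only: mult_eq_0_iff) simp
  qed
  have roots: "t1^2 - \<sigma> * t1 + \<pi> = 0" "t2^2 - \<sigma> * t2 + \<pi> = 0"
    by (rule root, simp add: t1_def t2_def field_simps)+
  have "\<sigma> \<noteq> 2 * t1" "\<sigma> \<noteq> 2 * t2" using d by (simp_all add: t1_def t2_def)
  then have "2 \<le> int_mult (\<alpha>, \<beta>, -1) (1, t1, \<alpha> + \<beta> * t1)" "2 \<le> int_mult (\<alpha>, \<beta>, -1) (1, t2, \<alpha> + \<beta> * t2)"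
    using double_point_on_line[OF sq] roots by auto
  moreover have "proj_class (1, t1, \<alpha> + \<beta> * t1) \<noteq> proj_class (1, t2, \<alpha> + \<beta> * t2)"
  proof
    assume "proj_class (1, t1, \<alpha> + \<beta> * t1) = proj_class (1, t2, \<alpha> + \<beta> * t2)"
    then obtain c where "(1, t1, \<alpha> + \<beta> * t1) = smult3 c (1, t2, \<alpha> + \<beta> * t2)"
      unfolding proj_class_eq_iff by blast
    then have "t1 = t2" by simp
    then show False using d by (simp add: t1_def t2_def)
  qed
  moreover have "(1::complex, t, \<alpha> + \<beta> * t) \<noteq> (0, 0, 0)" "incid (\<alpha>, \<beta>, -1) (1, t, \<alpha> + \<beta> * t)" for t
    by simp_all
  moreover have "(\<alpha>, \<beta>, -1::complex) \<noteq> (0, 0, 0)" by simp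
  ultimately show ?thesis unfolding bitangent48_def by blast
qed

lemma tangency_through_vertex:
  assumes p: "p = (x0, y0, z0)" "p \<noteq> (0, 0, 0)" and ip: "incid (\<mu>, -1, 0) p"
    and m: "2 \<le> int_mult (\<mu>, -1, 0) p"
  shows "x0 \<noteq> 0 \<and> z0 = 0"
proof -
  obtain q where iq: "incid (\<mu>, -1, 0) q" and nq: "\<not> (\<exists>c. q = smult3 c p)"
    and F: "F48 p = 0" and C1: "polar48 p q = 0"
    using int_mult_ge_2_imp_tangent[OF _ m] by auto
  obtain x1 y1 z1 where q: "q = (x1, y1, z1)" by (cases q) auto
  have y0: "y0 = \<mu> * x0" and y1: "y1 = \<mu> * x1" using ip iq p q by simp_all
  define gx gz where "gx = 4 * x0^3 * (1 + \<mu>^4) + z0^3" and "gz = 3 * x0 * z0^2"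
  have e1: "gx * x1 + gz * z1 = 0"
    using C1 unfolding polar48_def p q y0 y1 gx_def gz_def by (simp only: prod.case) algebra
  have "4 * F48 p = gx * x0 + gz * z0" unfolding p gx_def gz_def F48_simp y0 by algebra
  then have e2: "gx * x0 + gz * z0 = 0" using F by simp
  have "(x0, z0) \<noteq> (0, 0)" using p y0 by auto
  moreover have "\<not> (\<exists>c. x1 = c * x0 \<and> z1 = c * z0)" using nq by (auto simp: p q y0 y1 algebra_simps)
  ultimately have gx0: "gx = 0" and gz0: "gz = 0" using e1 e2
    by (auto dest: linear_form_vanishing[OF _ _ det_ne_0_if_not_multiple])
  have x0: "x0 \<noteq> 0"
  proof
    assume x0: "x0 = 0"
    then have "z0 = 0" using gx0 gx_def by simp
    then show False using x0 p y0 by simp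
  qed
  then show ?thesis using gz0 gz_def by simp
qed

lemma not_bitangent_through_vertex: "\<not> bitangent48 (\<mu>, -1, 0)"
proof
  assume bt: "bitangent48 (\<mu>, -1, 0)"
  have tangent: "x0 \<noteq> 0 \<and> z0 = 0"
    if "p = (x0, y0, z0)" "p \<noteq> (0, 0, 0)" "incid (\<mu>, -1, 0) p" "2 \<le> int_mult (\<mu>, -1, 0) p" for p x0 y0 z0
    using tangency_through_vertex[OF that] .
  from bt show False
  proof (cases rule: bitangent48E)
    case (ordinary p1 p2)
    obtain x1 y1 z1 x2 y2 z2 where p: "p1 = (x1, y1, z1)" "p2 = (x2, y2, z2)" by (cases p1; cases p2) auto
    have t: "x1 \<noteq> 0 \<and> z1 = 0" "x2 \<noteq> 0 \<and> z2 = 0" using tangent ordinary p by blast+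
    moreover have "y1 = \<mu> * x1" "y2 = \<mu> * x2" using ordinary(3,4) p by simp_all
    ultimately have "p2 = smult3 (x2 / x1) p1" using p by simp
    then have "proj_class p2 = proj_class p1"
      unfolding proj_class_eq_iff using t by (intro exI[of _ "x2 / x1"]) simp
    then show False using ordinary(5) by simp
  next
    case (hyperflex p)
    obtain x0 y0 z0 where p: "p = (x0, y0, z0)" by (cases p) auto
    have t: "x0 \<noteq> 0 \<and> z0 = 0" using tangent[OF p hyperflex(1,2)] hyperflex(3) by simp
    text \<open>The vertex \<open>(0 : 0 : 1)\<close> is a second point of \<open>C48\<close> on the line.\<close>
    have "proj_class (0, 0, 1) = proj_class p" using hyperflex(4)[rule_format, of "(0, 0, 1)"] by simp
    then obtain k where "(0, 0, 1) = smult3 k p" unfolding proj_class_eq_iff by blast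
    then show False using p t by simp
  qed
qed

lemma bitangent48_hyperflexI:
  assumes "l \<noteq> (0, 0, 0)" "p \<noteq> (0, 0, 0)" "incid l p" "int_mult l p = 4"
    and "\<And>p'. p' \<noteq> (0, 0, 0) \<Longrightarrow> incid l p' \<Longrightarrow> F48 p' = 0 \<Longrightarrow> proj_class p' = proj_class p"
  shows "bitangent48 l"
  unfolding bitangent48_def using assms by blast

lemma hyperflex_line_is_bitangent:
  fixes \<alpha> :: complex assumes "\<alpha>^3 = -1" shows "bitangent48 (\<alpha>, 0, -1)"
proof -
  let ?p = "(1, 0, \<alpha>) :: pt3"
  have im: "int_mult (\<alpha>, 0, -1) ?p = 4"
  proof (rule int_mult_eq_4I)
    fix q assume iq: "incid (\<alpha>, 0, -1) q" and nq: "\<not> (\<exists>c. q = smult3 c ?p)"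
    obtain x1 y1 z1 where q: "q = (x1, y1, z1)" by (cases q) auto
    have z1: "z1 = \<alpha> * x1" using iq q by simp
    have y1: "y1 \<noteq> 0"
    proof
      assume "y1 = 0"
      then have "q = smult3 x1 ?p" using q z1 by simp
      then show False using nq by blast
    qed
    have "poly (restr48 ?p q) t = poly (monom (y1^4) 4) t" for t
    proof -
      have "poly (restr48 ?p q) t = (1 + t * x1)^4 * (1 + \<alpha>^3) + (t * y1)^4"
        unfolding q poly_restr48 z1 F48_simp by algebra
      then show ?thesis using assms by (simp add: poly_monom power_mult_distrib)
    qed
    then have "restr48 ?p q = monom (y1^4) 4" by (intro poly_eq_poly_eq_iff[THEN iffD1]) auto
    then show "\<exists>c. c \<noteq> 0 \<and> restr48 ?p q = monom c 4" using y1 by auto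
  qed simp
  have uniq: "proj_class p' = proj_class ?p"
    if "p' \<noteq> (0, 0, 0)" "incid (\<alpha>, 0, -1) p'" "F48 p' = 0" for p'
  proof -
    obtain x y z where p': "p' = (x, y, z)" by (cases p') auto
    have z: "z = \<alpha> * x" using that p' by simp
    have "F48 p' = x^4 * (1 + \<alpha>^3) + y^4" unfolding p' F48_simp z by algebra
    then have "y = 0" using that assms by simp
    then have "x \<noteq> 0" "p' = smult3 x ?p" using that(1) p' z by auto
    then show ?thesis unfolding proj_class_eq_iff by blast
  qed
  show ?thesis by (rule bitangent48_hyperflexI[OF _ _ _ im uniq]) simp_all
qed

lemma vertical_line_is_bitangent: "bitangent48 (1, 0, 0)"
proof -
  let ?p = "(0, 0, 1) :: pt3"
  have im: "int_mult (1, 0, 0) ?p = 4"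
  proof (rule int_mult_eq_4I)
    fix q assume iq: "incid (1, 0, 0) q" and nq: "\<not> (\<exists>c. q = smult3 c ?p)"
    obtain x1 y1 z1 where q: "q = (x1, y1, z1)" by (cases q) auto
    have x1: "x1 = 0" using iq q by simp
    have y1: "y1 \<noteq> 0"
    proof
      assume "y1 = 0"
      then have "q = smult3 z1 ?p" using q x1 by simp
      then show False using nq by blast
    qed
    have "poly (restr48 ?p q) t = poly (monom (y1^4) 4) t" for t
      unfolding q poly_restr48 x1 F48_simp by (simp add: poly_monom power_mult_distrib)
    then have "restr48 ?p q = monom (y1^4) 4" by (intro poly_eq_poly_eq_iff[THEN iffD1]) auto
    then show "\<exists>c. c \<noteq> 0 \<and> restr48 ?p q = monom c 4" using y1 by auto
  qed simp
  have uniq: "proj_class p' = proj_class ?p"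
    if "p' \<noteq> (0, 0, 0)" "incid (1, 0, 0) p'" "F48 p' = 0" for p'
  proof -
    obtain x y z where p': "p' = (x, y, z)" by (cases p') auto
    have x: "x = 0" using that p' by simp
    then have y: "y = 0" using that p' by simp
    then have "z \<noteq> 0" "p' = smult3 z ?p" using that p' x by auto
    then show ?thesis unfolding proj_class_eq_iff by blast
  qed
  show ?thesis by (rule bitangent48_hyperflexI[OF _ _ _ im uniq]) simp_all
qed

lemma bitangent48_on_line_cases:
  assumes "bitangent48 (\<alpha>, \<beta>, -1)"
  shows "(\<exists>\<sigma> \<pi>. quartic_is_square \<alpha> \<beta> \<sigma> \<pi> \<and> \<sigma>^2 \<noteq> 4 * \<pi>) \<or> (\<beta> = 0 \<and> \<alpha>^3 = -1)"
  using assms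
proof (cases rule: bitangent48E)
  case (ordinary p1 p2)
  then show ?thesis using ordinary_bitangent_on_line_imp_square by blast
next
  case (hyperflex p)
  then show ?thesis using hyperflex_on_line by blast
qed

lemma bitangent48_through_vertex: "bitangent48 (a, b, 0) \<Longrightarrow> b = 0"
proof (rule ccontr)
  assume bt: "bitangent48 (a, b, 0)" and b: "b \<noteq> 0"
  then have "(a, b, 0) = smult3 (-b) (-a / b, -1, 0)" by simp
  then have "bitangent48 (-a / b, -1, 0)" using bitangent48_smult3[of "-b" "(-a / b, -1, 0)"] bt b by simp
  then show False using not_bitangent_through_vertex by blast
qed

lemma bitangent48_cases:
  assumes "bitangent48 l"
  obtains \<alpha> \<beta> \<sigma> \<pi> where "proj_class l = proj_class (\<alpha>, \<beta>, -1)" "quartic_is_square \<alpha> \<beta> \<sigma> \<pi>" "\<sigma>^2 \<noteq> 4 * \<pi>"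
  | \<alpha> where "proj_class l = proj_class (\<alpha>, 0, -1)" "\<alpha>^3 = -1"
  | "proj_class l = proj_class (1, 0, 0)"
proof -
  obtain a b c where l: "l = (a, b, c)" by (cases l) auto
  show thesis
  proof (cases "c = 0")
    case False
    define \<alpha> \<beta> where "\<alpha> = -a / c" and "\<beta> = -b / c"
    have l': "l = smult3 (-c) (\<alpha>, \<beta>, -1)" using False by (simp add: l \<alpha>_def \<beta>_def)
    then have pc: "proj_class l = proj_class (\<alpha>, \<beta>, -1)"
      unfolding proj_class_eq_iff using False by (intro exI[of _ "-c"]) simp
    have "bitangent48 (\<alpha>, \<beta>, -1)"
      using bitangent48_smult3[of "-c" "(\<alpha>, \<beta>, -1)"] assms l' False by simp
    from bitangent48_on_line_cases[OF this] show thesis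
    proof (elim disjE exE conjE)
      fix \<sigma> \<pi> assume "quartic_is_square \<alpha> \<beta> \<sigma> \<pi>" "\<sigma>^2 \<noteq> 4 * \<pi>"
      then show thesis using that(1) pc by blast
    next
      assume "\<beta> = 0" "\<alpha>^3 = -1"
      then show thesis using that(2) pc by blast
    qed
  next
    case True
    have "l \<noteq> (0, 0, 0)" using assms by (simp add: bitangent48_def)
    moreover have "bitangent48 (a, b, 0)" using assms l True by simp
    then have "b = 0" by (rule bitangent48_through_vertex)
    ultimately have "l = smult3 a (1, 0, 0)" "a \<noteq> 0" using l True by auto
    then show thesis using that(3) proj_class_eq_iff by blast
  qed
qed

section \<open>The 28 bitangents\<close>

definition sqrt3 :: complex where "sqrt3 = of_real (sqrt 3)"

lemma sqrt3_sq: "sqrt3 * sqrt3 = 3" and sqrt3_pow2: "sqrt3^2 = 3"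
  by (simp_all add: sqrt3_def power2_eq_square flip: of_real_mult)

lemma sqrt_3_gt: "3 / 2 < sqrt (3 :: real)"
  by (rule real_less_rsqrt) (simp add: power2_eq_square)

definition rho :: complex where "rho = of_real (root 4 (8 * sqrt 3 - 12))"

lemma rho_pow4: "rho^4 = 8 * sqrt3 - 12"
proof -
  have "root 4 (8 * sqrt 3 - 12) ^ 4 = 8 * sqrt 3 - 12" using sqrt_3_gt by simp
  then show ?thesis by (simp add: rho_def sqrt3_def flip: of_real_power)
qed

lemma rho_ne_0: "rho \<noteq> 0"
  using sqrt_3_gt by (simp add: rho_def)

definition eta :: complex where "eta = zeta12 + zeta12^2"

lemma eta_pow12: "eta^12 = -(1351 + 780 * sqrt3)"
proof -
  have "eta^12 = z12_val (z12_pow (0, 1, 1, 0) 12)"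
    by (simp only: z12_val_pow) (simp add: eta_def z12_val.simps)
  also have "z12_pow (0, 1, 1, 0) 12 = (-1351, -1560, 0, 780)" by simp
  finally show ?thesis by (simp add: z12_val_Re_Im sqrt3_def complex_eq_iff)
qed

lemma eta_ne_0: "eta \<noteq> 0"
proof
  assume "eta = 0"
  moreover have "1351 + 780 * sqrt3 = of_real (1351 + 780 * sqrt 3)" by (simp add: sqrt3_def)
  ultimately have "of_real (1351 + 780 * sqrt 3) = (0 :: complex)" using eta_pow12 by simp
  moreover have "1351 + 780 * sqrt 3 > (0 :: real)" by (simp add: add_pos_nonneg)
  ultimately show False by (simp only: of_real_eq_0_iff)
qed

text \<open>Coefficient vectors of the 28 bitangents over \<open>\<int>[\<zeta>]\<close>, the second coordinate divided by
  \<open>rho\<close>.  Lines \<open>0\<dots>11\<close> and \<open>12\<dots>23\<close> are the two families \<open>z = \<alpha> x + \<beta> y\<close> found in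
  \<open>square_solutions\<close>, lines \<open>24\<dots>26\<close> the hyperflex lines \<open>z = -\<zeta>\<^sup>4\<^sup>k x\<close>, line \<open>27\<close> is
  \<open>x = 0\<close>; here \<open>(-1,2,0,-1) = \<surd>3 - 1\<close>, \<open>(-1,0,1,0) = \<zeta>\<^sup>4\<close>, \<open>(0,1,1,0) = eta\<close> and
  \<open>(-1,-2,0,1) = (3\<surd>3 - 5) eta\<^sup>4\<close>.\<close>
definition line_z12 :: "nat \<Rightarrow> z12vec" where
  "line_z12 i =
    (if i < 12 then (z12_mul (-1, 2, 0, -1) (z12_pow (-1, 0, 1, 0) i), z12_pow (0, 1, 0, 0) i, (-1, 0, 0, 0))
     else if i < 24 then
       (z12_mul (-1, -2, 0, 1) (z12_pow (-1, 0, 1, 0) (i - 12)),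
        z12_mul (0, 1, 1, 0) (z12_pow (0, 1, 0, 0) (i - 12)), (-1, 0, 0, 0))
     else if i < 27 then (z12_sub (0, 0, 0, 0) (z12_pow (-1, 0, 1, 0) (i - 24)), (0, 0, 0, 0), (-1, 0, 0, 0))
     else ((1, 0, 0, 0), (0, 0, 0, 0), (0, 0, 0, 0)))"

definition bitangent_line :: "nat \<Rightarrow> pt3" where
  "bitangent_line i = (case line_z12 i of (a, b, c) \<Rightarrow> (z12_val a, rho * z12_val b, z12_val c))"

lemma z12_val_constants:
  "z12_val (0, 1, 0, 0) = zeta12" "z12_val (-1, 0, 1, 0) = zeta12^4" "z12_val (0, 1, 1, 0) = eta"
  "z12_val (-1, 2, 0, -1) = sqrt3 - 1" "z12_val (-1, -2, 0, 1) = (3 * sqrt3 - 5) * eta^4"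
proof -
  show "z12_val (0, 1, 0, 0) = zeta12" "z12_val (-1, 0, 1, 0) = zeta12^4" "z12_val (0, 1, 1, 0) = eta"
    by (simp_all add: z12_val.simps zeta12_pow4 eta_def)
  show "z12_val (-1, 2, 0, -1) = sqrt3 - 1" by (simp add: z12_val_Re_Im sqrt3_def complex_eq_iff)
  have "z12_val (-1, -2, 0, 1) = z12_val (z12_mul (-5, 6, 0, -3) (z12_pow (0, 1, 1, 0) 4))" by simp
  also have "\<dots> = z12_val (-5, 6, 0, -3) * eta^4"
    by (simp only: z12_val_mul z12_val_pow) (simp add: eta_def z12_val.simps)
  also have "z12_val (-5, 6, 0, -3) = 3 * sqrt3 - 5" by (simp add: z12_val_Re_Im sqrt3_def complex_eq_iff)
  finally show "z12_val (-1, -2, 0, 1) = (3 * sqrt3 - 5) * eta^4" .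
qed

lemma bitangent_line_family1:
  "j < 12 \<Longrightarrow> bitangent_line j = ((sqrt3 - 1) * (zeta12^j)^4, rho * zeta12^j, -1)"
  by (simp add: bitangent_line_def line_z12_def z12_val_constants flip: power_mult)
    (simp add: mult.commute)

lemma bitangent_line_family2:
  "j < 12 \<Longrightarrow> bitangent_line (12 + j) = ((3 * sqrt3 - 5) * (eta * zeta12^j)^4, rho * (eta * zeta12^j), -1)"
  by (simp add: bitangent_line_def line_z12_def z12_val_constants power_mult_distrib flip: power_mult)
    (simp add: mult.commute)

lemma bitangent_line_hyperflex: "k < 3 \<Longrightarrow> bitangent_line (24 + k) = (-(zeta12^(4 * k)), 0, -1)"
  by (simp add: bitangent_line_def line_z12_def z12_val_constants power_mult)

lemma bitangent_line_27: "bitangent_line 27 = (1, 0, 0)"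
  by (simp add: bitangent_line_def line_z12_def)

lemma half_cube_sq: "\<beta> = rho * u \<Longrightarrow> (\<beta>^3 / 2)^2 = rho^2 * u^6 * (2 * sqrt3 - 3)"
proof -
  assume "\<beta> = rho * u"
  then have "(\<beta>^3 / 2)^2 = rho^2 * u^6 * (rho^4 / 4)"
    by (simp add: power2_eq_square power3_eq_cube algebra_simps numeral_eq_Suc)
  also have "rho^4 / 4 = 2 * sqrt3 - 3" by (simp add: rho_pow4 field_simps)
  finally show ?thesis .
qed

lemma square_alpha_cases:
  assumes sq: "quartic_is_square \<alpha> \<beta> \<sigma> \<pi>" and \<beta>: "\<beta> \<noteq> 0"
  shows "12 * \<alpha> = (3 + sqrt3) * \<beta>^4 \<or> 12 * \<alpha> = (3 - sqrt3) * \<beta>^4"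
proof -
  have "\<beta>^3 = -2*\<sigma>" "3*\<alpha>*\<beta>^2 = \<sigma>^2 + 2*\<pi>" "3*\<alpha>^2*\<beta> = -2*\<sigma>*\<pi>"
    using sq by (simp_all add: quartic_is_square_def)
  then have "\<beta> * (24*\<alpha>^2 - 12*\<alpha>*\<beta>^4 + \<beta>^8) = 0" by algebra
  then have Q: "24*\<alpha>^2 - 12*\<alpha>*\<beta>^4 + \<beta>^8 = 0" using \<beta> by simp
  have "(12*\<alpha> - (3 + sqrt3)*\<beta>^4) * (12*\<alpha> - (3 - sqrt3)*\<beta>^4) = 6 * (24*\<alpha>^2 - 12*\<alpha>*\<beta>^4 + \<beta>^8)"
    using sqrt3_sq by (simp add: algebra_simps power2_eq_square numeral_eq_Suc)
  then show ?thesis using Q by simp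
qed

lemma square_first_family:
  assumes sq: "quartic_is_square \<alpha> \<beta> \<sigma> \<pi>" and b: "\<beta> = rho * u" and a: "\<alpha> = (sqrt3 - 1) * u^4"
  shows "u^12 = 1"
proof -
  have q: "sqrt3 * sqrt3 = 3" by (rule sqrt3_sq)
  have E2: "2*\<pi> = 3*\<alpha>*\<beta>^2 - \<sigma>^2" and E4: "1 + \<alpha>^3 = \<pi>^2" and \<sigma>: "\<sigma> = -(\<beta>^3 / 2)"
    using sq by (simp_all add: quartic_is_square_def)
  have \<sigma>2: "\<sigma>^2 = rho^2 * u^6 * (2 * sqrt3 - 3)" unfolding \<sigma> power2_minus by (rule half_cube_sq[OF b])
  have "2*\<pi> = rho^2 * u^6 * sqrt3"
    unfolding E2 \<sigma>2 a b by (simp add: algebra_simps numeral_eq_Suc)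
  then have "(2*\<pi>)^2 = (rho^2 * u^6 * sqrt3)^2" by (rule arg_cong)
  then have "4*\<pi>^2 = (rho^2 * u^6 * sqrt3)^2" by (simp add: power_mult_distrib)
  also have "\<dots> = rho^4 * u^12 * sqrt3^2" by (simp add: power_mult_distrib flip: power_mult)
  finally have l: "4*\<pi>^2 = (8*sqrt3 - 12) * u^12 * 3" by (simp only: rho_pow4 sqrt3_pow2)
  have "(sqrt3 - 1)^3 = 6*sqrt3 - 10" by (simp add: power3_eq_cube algebra_simps q)
  then have a3: "\<alpha>^3 = (6*sqrt3 - 10) * u^12" unfolding a by (simp add: power_mult_distrib flip: power_mult)
  have "4*(1 + \<alpha>^3) = 4 + (24*sqrt3 - 40)*u^12" unfolding a3 by (simp add: algebra_simps)
  then have "4 + (24*sqrt3 - 40)*u^12 = (8*sqrt3 - 12)*u^12*3" using E4 l by simp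
  then show "u^12 = 1" by (simp add: algebra_simps)
qed

lemma square_second_family:
  assumes sq: "quartic_is_square \<alpha> \<beta> \<sigma> \<pi>" and b: "\<beta> = rho * u" and a: "\<alpha> = (3 * sqrt3 - 5) * u^4"
  shows "u^12 = -(1351 + 780 * sqrt3)"
proof -
  have q: "sqrt3 * sqrt3 = 3" by (rule sqrt3_sq)
  have E2: "2*\<pi> = 3*\<alpha>*\<beta>^2 - \<sigma>^2" and E4: "1 + \<alpha>^3 = \<pi>^2" and \<sigma>: "\<sigma> = -(\<beta>^3 / 2)"
    using sq by (simp_all add: quartic_is_square_def)
  have \<sigma>2: "\<sigma>^2 = rho^2 * u^6 * (2 * sqrt3 - 3)" unfolding \<sigma> power2_minus by (rule half_cube_sq[OF b])
  have "2*\<pi> = rho^2 * u^6 * (7*sqrt3 - 12)"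
    unfolding E2 \<sigma>2 a b by (simp add: algebra_simps numeral_eq_Suc)
  then have "(2*\<pi>)^2 = (rho^2 * u^6 * (7*sqrt3 - 12))^2" by (rule arg_cong)
  then have "4*\<pi>^2 = (rho^2 * u^6 * (7*sqrt3 - 12))^2" by (simp add: power_mult_distrib)
  also have "\<dots> = rho^4 * u^12 * (7*sqrt3 - 12)^2" by (simp add: power_mult_distrib flip: power_mult)
  also have "(7*sqrt3 - 12)^2 = 291 - 168*sqrt3" by (simp add: power2_eq_square algebra_simps q)
  also have "rho^4 * u^12 * (291 - 168*sqrt3) = (4344*sqrt3 - 7524) * u^12"
    by (simp add: rho_pow4 algebra_simps q)
  finally have l: "4*\<pi>^2 = (4344*sqrt3 - 7524) * u^12" .
  have "(3*sqrt3 - 5)^3 = 306*sqrt3 - 530" by (simp add: power3_eq_cube algebra_simps q)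
  then have a3: "\<alpha>^3 = (306*sqrt3 - 530) * u^12" unfolding a by (simp add: power_mult_distrib flip: power_mult)
  have "4*(1 + \<alpha>^3) = 4 + (1224*sqrt3 - 2120)*u^12" unfolding a3 by (simp add: algebra_simps)
  then have "4 + (1224*sqrt3 - 2120)*u^12 = (4344*sqrt3 - 7524)*u^12" using E4 l by simp
  then have "4 * ((780*sqrt3 - 1351) * u^12) = 4 * 1" by (simp add: algebra_simps)
  then have k: "(780*sqrt3 - 1351) * u^12 = 1" by (simp only: mult_cancel_left) simp
  have "u^12 = -(780*sqrt3 + 1351) * ((780*sqrt3 - 1351) * u^12)" by (simp add: algebra_simps q)
  then show ?thesis using k by simp
qed

lemma square_solutions:
  assumes sq: "quartic_is_square \<alpha> \<beta> \<sigma> \<pi>" and \<beta>: "\<beta> \<noteq> 0"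
  defines "u \<equiv> \<beta> / rho"
  shows "(\<alpha> = (sqrt3 - 1) * u^4 \<and> u^12 = 1) \<or> (\<alpha> = (3 * sqrt3 - 5) * u^4 \<and> u^12 = -(1351 + 780 * sqrt3))"
proof -
  have b: "\<beta> = rho * u" using rho_ne_0 u_def by simp
  have b4: "\<beta>^4 = (8*sqrt3 - 12) * u^4" by (simp add: b power_mult_distrib rho_pow4)
  have q: "sqrt3 * sqrt3 = 3" by (rule sqrt3_sq)
  from square_alpha_cases[OF sq \<beta>] show ?thesis
  proof
    assume "12*\<alpha> = (3 + sqrt3)*\<beta>^4"
    also have "(3 + sqrt3)*\<beta>^4 = 12 * ((sqrt3 - 1) * u^4)" unfolding b4 using q by (simp add: algebra_simps)
    finally have a: "\<alpha> = (sqrt3 - 1) * u^4" by simp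
    then show ?thesis using square_first_family[OF sq b a] by simp
  next
    assume "12*\<alpha> = (3 - sqrt3)*\<beta>^4"
    also have "(3 - sqrt3)*\<beta>^4 = 12 * ((3 * sqrt3 - 5) * u^4)" unfolding b4 using q by (simp add: algebra_simps)
    finally have a: "\<alpha> = (3 * sqrt3 - 5) * u^4" by simp
    then show ?thesis using square_second_family[OF sq b a] by simp
  qed
qed

lemma square_imp_bitangent_line:
  assumes "quartic_is_square \<alpha> \<beta> \<sigma> \<pi>" "\<sigma>^2 \<noteq> 4 * \<pi>"
  shows "\<exists>i<28. (\<alpha>, \<beta>, -1) = bitangent_line i"
proof -
  have \<beta>: "\<beta> \<noteq> 0" using quartic_is_square_beta_ne_0[OF assms] .
  define u where "u = \<beta> / rho"
  have b: "\<beta> = rho * u" using rho_ne_0 u_def by simp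
  from square_solutions[OF assms(1) \<beta>] show ?thesis
  proof (elim disjE conjE, fold u_def)
    assume a: "\<alpha> = (sqrt3 - 1) * u^4" and "u^12 = 1"
    then obtain j where j: "j < 12" "u = zeta12^j" using root_of_unity_12 by blast
    then have "(\<alpha>, \<beta>, -1) = bitangent_line j" using bitangent_line_family1[OF j(1)] a b by simp
    then show ?thesis using j(1) by (intro exI[of _ j]) simp
  next
    assume a: "\<alpha> = (3 * sqrt3 - 5) * u^4" and u: "u^12 = -(1351 + 780 * sqrt3)"
    define v where "v = u / eta"
    have uv: "u = eta * v" using eta_ne_0 v_def by simp
    have "eta^12 * v^12 = eta^12 * 1" using u uv eta_pow12 by (simp add: power_mult_distrib)
    then obtain j where j: "j < 12" "v = zeta12^j" using eta_ne_0 root_of_unity_12 by auto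
    then have "(\<alpha>, \<beta>, -1) = bitangent_line (12 + j)" using bitangent_line_family2[OF j(1)] a b uv by simp
    then show ?thesis using j(1) by (intro exI[of _ "12 + j"]) simp
  qed
qed

lemma hyperflex_imp_bitangent_line:
  assumes "\<alpha>^3 = -1" shows "\<exists>i<28. (\<alpha>, 0, -1) = bitangent_line i"
proof -
  have "(-\<alpha>)^3 = 1" using assms by simp
  then obtain k where k: "k < 3" "-\<alpha> = zeta12^(4 * k)" using root_of_unity_3 by blast
  then have "\<alpha> = -(zeta12^(4 * k))" by (metis minus_minus)
  then have "(\<alpha>, 0, -1) = bitangent_line (24 + k)" using bitangent_line_hyperflex[OF k(1)] by simp
  then show ?thesis using k(1) by (intro exI[of _ "24 + k"]) simp
qed

lemma family_coefficients:
  assumes K: "(K = sqrt3 - 1 \<and> u^12 = 1) \<or> (K = 3 * sqrt3 - 5 \<and> u^12 = -(1351 + 780 * sqrt3))"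
  defines "M \<equiv> 3 * K - 2 * sqrt3 + 3"
  shows "(8 * sqrt3 - 12) * M = 6 * K^2" "(8 * sqrt3 - 12) * u^12 * M^2 = 4 * (1 + K^3 * u^12)"
    "2 * M \<noteq> 2 * sqrt3 - 3"
proof -
  have q: "sqrt3 * sqrt3 = 3" by (rule sqrt3_sq)
  from K show "(8 * sqrt3 - 12) * M = 6 * K^2" "(8 * sqrt3 - 12) * u^12 * M^2 = 4 * (1 + K^3 * u^12)"
    by (elim disjE conjE; use q in \<open>unfold M_def\<close>; algebra)+
  show "2 * M \<noteq> 2 * sqrt3 - 3"
  proof
    assume h: "2 * M = 2 * sqrt3 - 3"
    from K show False
    proof (elim disjE conjE)
      assume "K = sqrt3 - 1"
      then show False using h unfolding M_def by algebra
    next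
      assume "K = 3 * sqrt3 - 5"
      then have "12 * sqrt3 = 21" using h unfolding M_def by algebra
      then have s: "sqrt3 = 7 / 4" by (simp add: field_simps mult.commute)
      have "sqrt3 * sqrt3 = 49 / 16" unfolding s by simp
      then show False using q by simp
    qed
  qed
qed

lemma family_is_square:
  assumes u: "u \<noteq> 0"
    and K: "(K = sqrt3 - 1 \<and> u^12 = 1) \<or> (K = 3 * sqrt3 - 5 \<and> u^12 = -(1351 + 780 * sqrt3))"
  shows "\<exists>\<sigma> \<pi>. quartic_is_square (K * u^4) (rho * u) \<sigma> \<pi> \<and> \<sigma>^2 \<noteq> 4 * \<pi>"
proof -
  define \<alpha> \<beta> where "\<alpha> = K * u^4" and "\<beta> = rho * u"
  define \<sigma> where "\<sigma> = -(\<beta>^3 / 2)"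
  define \<pi> where "\<pi> = (3 * \<alpha> * \<beta>^2 - \<sigma>^2) / 2"
  define M where "M = 3 * K - 2 * sqrt3 + 3"
  note coeffs = family_coefficients[OF K, folded M_def]
  have \<sigma>2: "\<sigma>^2 = rho^2 * u^6 * (2 * sqrt3 - 3)"
    unfolding \<sigma>_def power2_minus by (rule half_cube_sq[OF \<beta>_def])
  have \<pi>2: "2 * \<pi> = rho^2 * u^6 * M"
  proof -
    have "2 * \<pi> = 3 * (K * u^4) * (rho * u)^2 - rho^2 * u^6 * (2 * sqrt3 - 3)"
      unfolding \<pi>_def \<alpha>_def \<beta>_def \<sigma>2 by simp
    also have "\<dots> = rho^2 * u^6 * M" unfolding M_def by algebra
    finally show ?thesis .
  qed
  have E3: "3 * \<alpha>^2 * \<beta> = -2 * \<sigma> * \<pi>"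
  proof -
    have "2 * (-2 * \<sigma> * \<pi>) = (rho * u)^3 * (2 * \<pi>)" unfolding \<sigma>_def \<beta>_def by (simp add: algebra_simps)
    also have "\<dots> = rho * u^9 * (rho^4 * M)" unfolding \<pi>2 by algebra
    also have "\<dots> = 2 * (3 * \<alpha>^2 * \<beta>)" unfolding rho_pow4 coeffs(1) \<alpha>_def \<beta>_def by algebra
    finally show ?thesis by algebra
  qed
  have E4: "1 + \<alpha>^3 = \<pi>^2"
  proof -
    have "4 * \<pi>^2 = rho^4 * u^12 * M^2" using \<pi>2 by algebra
    also have "\<dots> = 4 * (1 + \<alpha>^3)" unfolding rho_pow4 coeffs(2) \<alpha>_def by algebra
    finally show ?thesis by algebra
  qed
  have "\<sigma>^2 - 4 * \<pi> = rho^2 * u^6 * (2 * sqrt3 - 3 - 2 * M)" unfolding \<sigma>2 using \<pi>2 by algebra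
  then have "\<sigma>^2 \<noteq> 4 * \<pi>" using rho_ne_0 u coeffs(3) by auto
  moreover have "\<beta>^3 = -2 * \<sigma>" "3 * \<alpha> * \<beta>^2 = \<sigma>^2 + 2 * \<pi>"
    by (simp_all add: \<sigma>_def \<pi>_def field_simps)
  ultimately show ?thesis using E3 E4 unfolding quartic_is_square_def \<alpha>_def \<beta>_def by blast
qed

lemma bitangent_line_is_bitangent: assumes "i < 28" shows "bitangent48 (bitangent_line i)"
proof -
  have zeta12_ne_0: "zeta12 \<noteq> 0" using zeta12_pow_12 by auto
  have zeta12_pow_pow_12: "(zeta12^j)^12 = 1" for j
    by (simp add: zeta12_pow_12 mult.commute[of j] power_mult flip: power_mult[of zeta12 j 12])
  consider "i < 12" | "12 \<le> i \<and> i < 24" | "24 \<le> i \<and> i < 27" | "i = 27" using assms by linarith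
  then show ?thesis
  proof cases
    case 1
    from zeta12_pow_pow_12 show ?thesis unfolding bitangent_line_family1[OF 1]
      using family_is_square[of "zeta12^i" "sqrt3 - 1"] square_imp_bitangent zeta12_ne_0 by auto
  next
    case 2
    define j where "j = i - 12"
    have j: "j < 12" "i = 12 + j" using 2 j_def by auto
    have "(eta * zeta12^j)^12 = -(1351 + 780 * sqrt3)"
      by (simp only: power_mult_distrib eta_pow12 zeta12_pow_pow_12) simp
    then show ?thesis unfolding j(2) bitangent_line_family2[OF j(1)]
      using family_is_square[of "eta * zeta12^j" "3 * sqrt3 - 5"] square_imp_bitangent zeta12_ne_0 eta_ne_0
      by auto
  next
    case 3
    define k where "k = i - 24"
    have k: "k < 3" "i = 24 + k" using 3 k_def by auto
    have "(-(zeta12^(4 * k)))^3 = -((zeta12^12)^k)" by (simp add: mult.commute flip: power_mult)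
    then have "(-(zeta12^(4 * k)))^3 = -1" by (simp add: zeta12_pow_12)
    then show ?thesis unfolding k(2) bitangent_line_hyperflex[OF k(1)] by (rule hyperflex_line_is_bitangent)
  next
    case 4
    then show ?thesis by (simp add: bitangent_line_27 vertical_line_is_bitangent)
  qed
qed

lemma bitangent_arr_eq: "bitangent_arr = (\<lambda>i. proj_class (bitangent_line i)) ` {..<28}"
proof
  show "(\<lambda>i. proj_class (bitangent_line i)) ` {..<28} \<subseteq> bitangent_arr"
    unfolding bitangent_arr_def using bitangent_line_is_bitangent by blast
  show "bitangent_arr \<subseteq> (\<lambda>i. proj_class (bitangent_line i)) ` {..<28}"
  proof
    fix L assume "L \<in> bitangent_arr"
    then obtain l where L: "L = proj_class l" and bt: "bitangent48 l" unfolding bitangent_arr_def by blast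
    have "\<exists>i<28. proj_class l = proj_class (bitangent_line i)"
      using bt
    proof (cases rule: bitangent48_cases)
      case (1 \<alpha> \<beta> \<sigma> \<pi>)
      then show ?thesis using square_imp_bitangent_line by metis
    next
      case (2 \<alpha>)
      then show ?thesis using hyperflex_imp_bitangent_line by metis
    next
      case 3
      then show ?thesis using bitangent_line_27 by (intro exI[of _ 27]) simp
    qed
    then show "L \<in> (\<lambda>i. proj_class (bitangent_line i)) ` {..<28}" using L by auto
  qed
qed

section \<open>Concurrent bitangents\<close>

lemma cross_bitangent_line:
  "cross (bitangent_line a) (bitangent_line b) =
    (case z12_cross (line_z12 a) (line_z12 b) of (n1, n2, n3) \<Rightarrow> (rho * z12_val n1, z12_val n2, rho * z12_val n3))"
  by (cases "line_z12 a"; cases "line_z12 b") (simp add: bitangent_line_def algebra_simps)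

lemma incid_bitangent_line_cross:
  "incid (bitangent_line c) (cross (bitangent_line a) (bitangent_line b)) \<longleftrightarrow>
    z12_dot (line_z12 c) (z12_cross (line_z12 a) (line_z12 b)) = (0, 0, 0, 0)"
proof -
  obtain n1 n2 n3 where N: "z12_cross (line_z12 a) (line_z12 b) = (n1, n2, n3)"
    by (cases "z12_cross (line_z12 a) (line_z12 b)") auto
  obtain a3 b3 c3 where C: "line_z12 c = (a3, b3, c3)" by (cases "line_z12 c") auto
  have "incid (bitangent_line c) (cross (bitangent_line a) (bitangent_line b)) \<longleftrightarrow>
      rho * z12_val (z12_dot (line_z12 c) (n1, n2, n3)) = 0"
    unfolding cross_bitangent_line N by (simp add: C bitangent_line_def algebra_simps)
  then show ?thesis using rho_ne_0 by (simp add: N z12_val_eq_0_iff)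
qed

lemma cross_bitangent_line_ne_0:
  assumes "z12_cross (line_z12 a) (line_z12 b) \<noteq> ((0, 0, 0, 0), (0, 0, 0, 0), (0, 0, 0, 0))"
  shows "cross (bitangent_line a) (bitangent_line b) \<noteq> (0, 0, 0)"
  using assms rho_ne_0 unfolding cross_bitangent_line
  by (cases "z12_cross (line_z12 a) (line_z12 b)") (auto simp: z12_val_eq_0_iff)

definition indexed_lines :: "(nat \<times> z12vec) list" where
  "indexed_lines = map (\<lambda>k. (k, line_z12 k)) [0..<28]"

definition incident_indices :: "z12vec \<Rightarrow> (nat \<times> z12vec) list \<Rightarrow> nat list" where
  "incident_indices N xs = [c. (c, C) \<leftarrow> xs, z12_dot C N = (0, 0, 0, 0)]"

text \<open>Organised for evaluation by the simplifier: the 28 coefficient vectors are computed once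
  (the \<open>let\<close>), and the meet of each pair once, before it is tested against the later lines.\<close>
definition concurrent_triples :: "(nat \<times> nat \<times> nat) list" where
  "concurrent_triples = (let E = indexed_lines in
     [(a, b, c). (b, B) \<leftarrow> E, (a, A) \<leftarrow> take b E, c \<leftarrow> incident_indices (z12_cross A B) (drop (Suc b) E)])"

lemma set_incident_indices: "set (incident_indices N (map (\<lambda>k. (k, line_z12 k)) xs)) =
    {c \<in> set xs. z12_dot (line_z12 c) N = (0, 0, 0, 0)}"
  by (auto simp: incident_indices_def)

lemma take_indexed_lines: "take b indexed_lines = map (\<lambda>k. (k, line_z12 k)) [0..<min b 28]"
  and drop_indexed_lines: "drop b indexed_lines = map (\<lambda>k. (k, line_z12 k)) [b..<28]"
  by (simp_all add: indexed_lines_def take_map drop_map min_def)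

lemma mem_concurrent_triples:
  "(a, b, c) \<in> set concurrent_triples \<longleftrightarrow>
    a < b \<and> b < c \<and> c < 28 \<and> z12_dot (line_z12 c) (z12_cross (line_z12 a) (line_z12 b)) = (0, 0, 0, 0)"
    (is "_ \<longleftrightarrow> ?rhs")
proof
  show "(a, b, c) \<in> set concurrent_triples \<Longrightarrow> ?rhs"
    unfolding concurrent_triples_def Let_def take_indexed_lines drop_indexed_lines
    by (auto simp: set_incident_indices indexed_lines_def)
  assume ?rhs
  then show "(a, b, c) \<in> set concurrent_triples"
    unfolding concurrent_triples_def Let_def take_indexed_lines drop_indexed_lines
    by (simp add: set_incident_indices indexed_lines_def) (rule bexI[of _ b], rule bexI[of _ a], auto)
qed

text \<open>The 32 triple and 7 quadruple points of the arrangement, each given by the lines through it.\<close>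
definition special_points :: "nat list list" where
  "special_points =
    [[0, 1, 23], [0, 4, 8], [0, 11, 22], [0, 13, 20], [1, 2, 12], [1, 5, 9], [1, 14, 21], [2, 3, 13],
     [2, 6, 10], [2, 15, 22], [3, 4, 14], [3, 7, 11], [3, 16, 23], [4, 5, 15], [4, 12, 17], [5, 6, 16],
     [5, 13, 18], [6, 7, 17], [6, 14, 19], [7, 8, 18], [7, 15, 20], [8, 9, 19], [8, 16, 21], [9, 10, 20],
     [9, 17, 22], [10, 11, 21], [10, 18, 23], [11, 12, 19], [12, 16, 20], [13, 17, 21], [14, 18, 22],
     [15, 19, 23],
     [0, 3, 6, 9], [1, 4, 7, 10], [2, 5, 8, 11], [12, 15, 18, 21], [13, 16, 19, 22], [14, 17, 20, 23],
     [24, 25, 26, 27]]"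

lemma special_points_shape:
  "distinct special_points"
  "\<forall>m\<in>set special_points. sorted m \<and> distinct m \<and> (length m = 3 \<or> length m = 4)"
  "length (filter (\<lambda>m. length m = 3) special_points) = 32"
  "length (filter (\<lambda>m. length m = 4) special_points) = 7"
  by (simp_all add: special_points_def)

lemma concurrent_triples_in_special_points:
  "\<forall>(a, b, c)\<in>set concurrent_triples. \<exists>m\<in>set special_points. a \<in> set m \<and> b \<in> set m \<and> c \<in> set m"
proof -
  have "list_all (\<lambda>(a, b, c). list_ex (\<lambda>m. a \<in> set m \<and> b \<in> set m \<and> c \<in> set m) special_points)
      concurrent_triples"
    by (simp add: concurrent_triples_def incident_indices_def indexed_lines_def line_z12_def
        special_points_def upt_rec)
  then show ?thesis by (simp add: list_all_iff list_ex_iff)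
qed

lemma special_points_exact:
  "\<forall>m\<in>set special_points.
     incident_indices (z12_cross (line_z12 (m ! 0)) (line_z12 (m ! 1))) indexed_lines = m"
proof -
  have "list_all (\<lambda>m. incident_indices (z12_cross (line_z12 (m ! 0)) (line_z12 (m ! 1))) indexed_lines = m)
      special_points"
    by (simp add: incident_indices_def indexed_lines_def line_z12_def special_points_def upt_rec)
  then show ?thesis by (simp add: list_all_iff)
qed

lemma z12_cross_lines_ne_0:
  assumes "a < b" "b < 28"
  shows "z12_cross (line_z12 a) (line_z12 b) \<noteq> ((0, 0, 0, 0), (0, 0, 0, 0), (0, 0, 0, 0))"
proof -
  have "list_all (\<lambda>(b, B). list_all (\<lambda>(a, A). z12_cross A B \<noteq> ((0, 0, 0, 0), (0, 0, 0, 0), (0, 0, 0, 0)))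
      (take b indexed_lines)) indexed_lines"
    by (simp add: indexed_lines_def line_z12_def upt_rec)
  then have "\<forall>b<28. \<forall>a<b. z12_cross (line_z12 a) (line_z12 b) \<noteq> ((0, 0, 0, 0), (0, 0, 0, 0), (0, 0, 0, 0))"
    unfolding list_all_iff take_indexed_lines by (auto simp: indexed_lines_def)
  then show ?thesis using assms by blast
qed

lemma cross_bitangent_lines_ne_0:
  assumes "a < 28" "b < 28" "a \<noteq> b"
  shows "cross (bitangent_line a) (bitangent_line b) \<noteq> (0, 0, 0)"
proof (cases "a < b")
  case True
  then show ?thesis using cross_bitangent_line_ne_0 z12_cross_lines_ne_0 assms by blast
next
  case False
  then have "cross (bitangent_line b) (bitangent_line a) \<noteq> (0, 0, 0)"
    using cross_bitangent_line_ne_0 z12_cross_lines_ne_0 assms by simp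
  then show ?thesis by (metis cross_swap smult3_eq_0_iff)
qed

lemma inj_on_bitangent_line_class: "inj_on (\<lambda>i. proj_class (bitangent_line i)) {..<28}"
proof (rule inj_onI, rule ccontr)
  fix i j assume ij: "i \<in> {..<28}" "j \<in> {..<28}" "proj_class (bitangent_line i) = proj_class (bitangent_line j)"
    "i \<noteq> j"
  then obtain c where "bitangent_line i = smult3 c (bitangent_line j)" unfolding proj_class_eq_iff by blast
  then have "cross (bitangent_line j) (bitangent_line i) = (0, 0, 0)" by (simp add: cross_smult3_self)
  then show False using cross_bitangent_lines_ne_0 ij by simp
qed

definition lines_at :: "pt3 \<Rightarrow> nat set" where
  "lines_at p = {i. i < 28 \<and> incid (bitangent_line i) p}"

lemma lines_through_bitangent_arr:
  "lines_through bitangent_arr (proj_class p) = (\<lambda>i. proj_class (bitangent_line i)) ` lines_at p"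
  unfolding lines_through_eq bitangent_arr_eq lines_at_def by auto

lemma card_lines_through_bitangent_arr:
  "card (lines_through bitangent_arr (proj_class p)) = card (lines_at p)"
  unfolding lines_through_bitangent_arr
  by (rule card_image, rule inj_on_subset[OF inj_on_bitangent_line_class]) (auto simp: lines_at_def)

lemma lines_at_eq_lines_at_meet:
  assumes "p \<noteq> (0, 0, 0)" "a \<in> lines_at p" "b \<in> lines_at p" "a \<noteq> b"
  shows "lines_at p = lines_at (cross (bitangent_line a) (bitangent_line b))"
proof -
  have "cross (bitangent_line a) (bitangent_line b) \<noteq> (0, 0, 0)"
    using assms(2-4) cross_bitangent_lines_ne_0 by (simp add: lines_at_def)
  then obtain k where "k \<noteq> 0" "p = smult3 k (cross (bitangent_line a) (bitangent_line b))"
    using incid_two_lines_imp_cross assms(1-3) unfolding lines_at_def proj_class_eq_iff by blast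
  then show ?thesis by (simp add: lines_at_def incid_smult3_point)
qed

lemma lines_at_meet_z12: "lines_at (cross (bitangent_line a) (bitangent_line b)) =
    set (incident_indices (z12_cross (line_z12 a) (line_z12 b)) indexed_lines)"
  by (auto simp: lines_at_def indexed_lines_def set_incident_indices incid_bitangent_line_cross)

definition special_point :: "nat list \<Rightarrow> pt3" where
  "special_point m = cross (bitangent_line (m ! 0)) (bitangent_line (m ! 1))"

lemma special_point:
  assumes "m \<in> set special_points"
  shows "lines_at (special_point m) = set m" "special_point m \<noteq> (0, 0, 0)"
proof -
  show m: "lines_at (special_point m) = set m"
    unfolding special_point_def lines_at_meet_z12 using special_points_exact assms by simp
  have "sorted m" "distinct m" and len: "3 \<le> length m" using special_points_shape(2) assms by auto
  then have "sorted_wrt (<) m" by (simp add: strict_sorted_iff)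
  then have "m ! 0 < m ! 1" using len by (simp add: sorted_wrt_nth_less)
  moreover have "0 < length m" "1 < length m" using len by linarith+
  then have "m ! 0 \<in> set m" "m ! 1 \<in> set m" using nth_mem by blast+
  moreover have "set m \<subseteq> {..<28}" unfolding m[symmetric] by (auto simp: lines_at_def)
  ultimately show "special_point m \<noteq> (0, 0, 0)"
    unfolding special_point_def by (intro cross_bitangent_lines_ne_0) auto
qed

lemma three_elements:
  fixes S :: "nat set" assumes "finite S" "3 \<le> card S"
  obtains a b c where "a < b" "b < c" "a \<in> S" "b \<in> S" "c \<in> S"
proof -
  obtain xs where xs: "sorted_wrt (<) xs" "set xs = S" "length xs = card S"
    using finite_set_strict_sorted[OF assms(1)] by blast
  then have "xs ! 0 < xs ! 1" "xs ! 1 < xs ! 2" using assms(2) by (simp_all add: sorted_wrt_nth_less)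
  moreover have "xs ! 0 \<in> S" "xs ! 1 \<in> S" "xs ! 2 \<in> S" using xs assms(2) nth_mem by fastforce+
  ultimately show thesis using that by blast
qed

lemma multiple_point_is_special:
  assumes p: "p \<noteq> (0, 0, 0)" and three: "3 \<le> card (lines_at p)"
  shows "\<exists>m\<in>set special_points. proj_class p = proj_class (special_point m) \<and> lines_at p = set m"
proof -
  have "finite (lines_at p)" by (simp add: lines_at_def)
  then obtain a b c where abc: "a < b" "b < c" "a \<in> lines_at p" "b \<in> lines_at p" "c \<in> lines_at p"
    using three three_elements by metis
  have meet: "lines_at p = lines_at (cross (bitangent_line a) (bitangent_line b))"
    using lines_at_eq_lines_at_meet[OF p abc(3,4)] abc(1) by simp
  then have "(a, b, c) \<in> set concurrent_triples"
    using abc by (simp add: mem_concurrent_triples lines_at_def incid_bitangent_line_cross)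
  then obtain m where m: "m \<in> set special_points" "a \<in> set m" "b \<in> set m" "c \<in> set m"
    using concurrent_triples_in_special_points by blast
  have "lines_at (special_point m) = lines_at (cross (bitangent_line a) (bitangent_line b))"
    using lines_at_eq_lines_at_meet[OF special_point(2)[OF m(1)]] special_point(1)[OF m(1)] m abc(1) by simp
  then have lines: "lines_at p = set m" using meet special_point(1)[OF m(1)] by simp
  have ne: "cross (bitangent_line a) (bitangent_line b) \<noteq> (0, 0, 0)"
    using cross_bitangent_lines_ne_0 abc by (simp add: lines_at_def)
  have "a \<in> lines_at (special_point m)" "b \<in> lines_at (special_point m)"
    using special_point(1)[OF m(1)] m by simp_all
  then have "proj_class (special_point m) = proj_class (cross (bitangent_line a) (bitangent_line b))"
    using incid_two_lines_imp_cross[OF ne special_point(2)[OF m(1)]] by (simp add: lines_at_def)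
  moreover have "proj_class p = proj_class (cross (bitangent_line a) (bitangent_line b))"
    using incid_two_lines_imp_cross[OF ne p] abc by (simp add: lines_at_def)
  ultimately show ?thesis using m(1) lines by auto
qed

lemma lines_through_bitangent_arr_le_4: "P \<in> P2 \<Longrightarrow> card (lines_through bitangent_arr P) \<le> 4"
proof (elim P2_cases)
  fix p assume P: "P = proj_class p" and p: "p \<noteq> (0, 0, 0)"
  show "card (lines_through bitangent_arr P) \<le> 4"
  proof (cases "3 \<le> card (lines_at p)")
    case True
    then obtain m where "m \<in> set special_points" "lines_at p = set m"
      using multiple_point_is_special[OF p] by blast
    then show ?thesis using special_points_shape(2) card_length[of m]
      unfolding P card_lines_through_bitangent_arr by fastforce
  qed (simp add: P card_lines_through_bitangent_arr)
qed

lemma n_pts_bitangent_arr_special: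
  assumes "3 \<le> k"
  shows "n_pts bitangent_arr k = length (filter (\<lambda>m. length m = k) special_points)"
proof -
  let ?M = "set (filter (\<lambda>m. length m = k) special_points)"
  let ?f = "\<lambda>m. proj_class (special_point m)"
  have shape: "sorted m" "distinct m" if "m \<in> set special_points" for m
    using special_points_shape(2) that by auto
  have card_m: "card (lines_through bitangent_arr (?f m)) = length m" if "m \<in> set special_points" for m
    using special_point(1)[OF that] shape[OF that] by (simp add: card_lines_through_bitangent_arr distinct_card)
  have "{P \<in> P2. card (lines_through bitangent_arr P) = k} = ?f ` ?M"
  proof
    show "?f ` ?M \<subseteq> {P \<in> P2. card (lines_through bitangent_arr P) = k}"
    proof
      fix P assume "P \<in> ?f ` ?M"
      then obtain m where "m \<in> set special_points" "length m = k" "P = ?f m" by auto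
      then show "P \<in> {P \<in> P2. card (lines_through bitangent_arr P) = k}"
        using special_point(2) card_m proj_class_in_P2 by blast
    qed
    show "{P \<in> P2. card (lines_through bitangent_arr P) = k} \<subseteq> ?f ` ?M"
    proof
      fix P assume P: "P \<in> {P \<in> P2. card (lines_through bitangent_arr P) = k}"
      then obtain p where p: "P = proj_class p" "p \<noteq> (0, 0, 0)" unfolding P2_def by blast
      then have "3 \<le> card (lines_at p)" using P assms by (simp add: card_lines_through_bitangent_arr)
      then obtain m where m: "m \<in> set special_points" "P = ?f m" "lines_at p = set m"
        using multiple_point_is_special[OF p(2)] p(1) by blast
      then have "length m = k" using P card_m by simp
      then show "P \<in> ?f ` ?M" using m by auto
    qed
  qed
  moreover have "inj_on ?f ?M"
  proof (rule inj_onI)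
    fix m m' assume "m \<in> ?M" "m' \<in> ?M" "?f m = ?f m'"
    then have "m \<in> set special_points" "m' \<in> set special_points"
      "lines_at (special_point m) = lines_at (special_point m')"
      by (auto simp: proj_class_eq_iff lines_at_def incid_smult3_point)
    then show "m = m'" using special_point(1) shape sorted_distinct_set_unique by metis
  qed
  moreover have "card ?M = length (filter (\<lambda>m. length m = k) special_points)"
    by (rule distinct_card) (simp add: special_points_shape(1))
  ultimately show ?thesis unfolding n_pts_def by (simp add: card_image)
qed

theorem proposition3p3:
  shows "(\<forall>P\<in>P2. card (lines_through bitangent_arr P) \<le> 4)
     \<and> n_pts bitangent_arr 2 = 240
     \<and> n_pts bitangent_arr 3 = 32
     \<and> n_pts bitangent_arr 4 = 7"
proof -
  have le4: "\<forall>P\<in>P2. card (lines_through bitangent_arr P) \<le> 4"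
    using lines_through_bitangent_arr_le_4 by blast
  have n3: "n_pts bitangent_arr 3 = 32" and n4: "n_pts bitangent_arr 4 = 7"
    using n_pts_bitangent_arr_special special_points_shape(3,4) by simp_all
  have "bitangent_line i \<noteq> (0, 0, 0)" if "i < 28" for i
    using bitangent_line_is_bitangent[OF that] by (simp add: bitangent48_def)
  then have fin: "finite bitangent_arr" and sub: "bitangent_arr \<subseteq> P2"
    unfolding bitangent_arr_eq using proj_class_in_P2 by blast+
  have "card bitangent_arr = 28"
    unfolding bitangent_arr_eq by (simp add: card_image inj_on_bitangent_line_class)
  then have "n_pts bitangent_arr 2 + 3 * 32 + 6 * 7 = 28 choose 2"
    using arrangement_count_pairs[OF fin sub] sum_choose_2_by_multiplicity[OF finite_multiple_points[OF fin sub] le4]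
    by (simp add: n_pts_def n3[unfolded n_pts_def] n4[unfolded n_pts_def])
  then have "n_pts bitangent_arr 2 = 240" by (simp add: binomial_eq_0 numeral_eq_Suc)
  with le4 n3 n4 show ?thesis by blast
qed

end
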